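(* Let $R$ be a P$v$MD. The following conditions are equivalent: (i) $R$ is a $tRTP$-domain; (ii) each branched $t$-prime $P$ contains a finitely generated ideal $J$ such that $J\subseteq P$ and $J\not\subseteq M$ for each $t$-maximal ideal $M$ not containing $P$; (iii) each branched $t$-prime is the radical of a $v$-finite divisorial ideal; (iv) each nonzero principal ideal has at most finitely many minimal primes; (v) each nonzero finitely generated ideal has at most finitely many minimal $t$-primes; (vi) each $v$-finite divisorial ideal has at most finitely many minimal primes.
   Context: $R$ is an integral domain with quotient field $K\neq R$. For nonzero $R$-submodules $A,B$ of $K$, $(A:B)=\{x\in K: xB\subseteq A\}$. For a nonzero fractional ideal $I$, $I_v=(R:(R:I))$, $I_t=\bigcup\{J_v: J\subseteq I\text{ nonzero finitely generated}\}$; $I$ is divisorial if $I=I_v$, a $t$-ideal if $I=I_t$; a $v$-finite divisorial ideal is one of the form $J_v$ with $J$ finitely generated. A $t$-prime is a prime $t$-ideal; a $t$-maximal ideal is an ideal maximal among proper $t$-ideals. $R$ is a P$v$MD if $R_M$ is a valuation domain for every $t$-maximal $M$. A prime $P$ is branched if there is a $P$-primary ideal different from $P$. $R$ is a $tRTP$-domain ($t$-radical trace property) if for each nonzero ideal $I$ of $R$, either $(I(R:I))_t=R$ or $(I(R:I))_t$ is a radical ideal. *)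

theory Defs
  imports Main
begin

text \<open>The quotient field K is modelled as a type 'k of class field; the domain R is a
subset of it.\<close>

definition is_subring :: "'k::field set \<Rightarrow> bool" where
  "is_subring R \<longleftrightarrow> 0 \<in> R \<and> 1 \<in> R \<and> (\<forall>a\<in>R. \<forall>b\<in>R. a + b \<in> R \<and> a * b \<in> R \<and> - a \<in> R)"

definition has_quotient_field :: "'k::field set \<Rightarrow> bool" where
  "has_quotient_field R \<longleftrightarrow> (\<forall>x. \<exists>a\<in>R. \<exists>b\<in>R. b \<noteq> 0 \<and> x = a / b)"

definition rsubmodule :: "'k::field set \<Rightarrow> 'k set \<Rightarrow> bool" where
  "rsubmodule R A \<longleftrightarrow> 0 \<in> A \<and> (\<forall>a\<in>A. \<forall>b\<in>A. a + b \<in> A) \<and> (\<forall>r\<in>R. \<forall>a\<in>A. r * a \<in> A)"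

definition rideal :: "'k::field set \<Rightarrow> 'k set \<Rightarrow> bool" where
  "rideal R I \<longleftrightarrow> rsubmodule R I \<and> I \<subseteq> R"

definition rspan :: "'k::field set \<Rightarrow> 'k set \<Rightarrow> 'k set" where
  "rspan R S = {x. \<exists>F r. finite F \<and> F \<subseteq> S \<and> (\<forall>s\<in>F. r s \<in> R) \<and> x = (\<Sum>s\<in>F. r s * s)}"

definition fin_gen :: "'k::field set \<Rightarrow> 'k set \<Rightarrow> bool" where
  "fin_gen R J \<longleftrightarrow> (\<exists>F. finite F \<and> J = rspan R F)"

definition colon :: "'k::field set \<Rightarrow> 'k set \<Rightarrow> 'k set" where
  "colon A B = {x. \<forall>b\<in>B. x * b \<in> A}"

definition vop :: "'k::field set \<Rightarrow> 'k set \<Rightarrow> 'k set" where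
  "vop R I = colon R (colon R I)"

definition top_t :: "'k::field set \<Rightarrow> 'k set \<Rightarrow> 'k set" where
  "top_t R I = \<Union>{vop R J | J. J \<subseteq> I \<and> J \<noteq> {0} \<and> fin_gen R J}"

definition iprod :: "'k::field set \<Rightarrow> 'k set \<Rightarrow> 'k set \<Rightarrow> 'k set" where
  "iprod R A B = rspan R {a * b | a b. a \<in> A \<and> b \<in> B}"

definition rad :: "'k::field set \<Rightarrow> 'k set \<Rightarrow> 'k set" where
  "rad R I = {x \<in> R. \<exists>n. x ^ n \<in> I}"

definition t_ideal :: "'k::field set \<Rightarrow> 'k set \<Rightarrow> bool" where
  "t_ideal R I \<longleftrightarrow> rideal R I \<and> I \<noteq> {0} \<and> top_t R I = I"

definition prime_ideal :: "'k::field set \<Rightarrow> 'k set \<Rightarrow> bool" where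
  "prime_ideal R P \<longleftrightarrow> rideal R P \<and> P \<noteq> R \<and> (\<forall>a\<in>R. \<forall>b\<in>R. a * b \<in> P \<longrightarrow> a \<in> P \<or> b \<in> P)"

definition t_prime :: "'k::field set \<Rightarrow> 'k set \<Rightarrow> bool" where
  "t_prime R P \<longleftrightarrow> prime_ideal R P \<and> t_ideal R P"

definition t_maximal :: "'k::field set \<Rightarrow> 'k set \<Rightarrow> bool" where
  "t_maximal R M \<longleftrightarrow> t_ideal R M \<and> M \<noteq> R \<and>
     (\<forall>N. t_ideal R N \<and> N \<noteq> R \<and> M \<subseteq> N \<longrightarrow> N = M)"

definition localization :: "'k::field set \<Rightarrow> 'k set \<Rightarrow> 'k set" where
  "localization R M = {a / s | a s. a \<in> R \<and> s \<in> R \<and> s \<notin> M}"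

definition valuation_domain :: "'k::field set \<Rightarrow> bool" where
  "valuation_domain V \<longleftrightarrow> (\<forall>x. x \<noteq> 0 \<longrightarrow> x \<in> V \<or> inverse x \<in> V)"

definition PvMD :: "'k::field set \<Rightarrow> bool" where
  "PvMD R \<longleftrightarrow> (\<forall>M. t_maximal R M \<longrightarrow> valuation_domain (localization R M))"

definition primary_ideal :: "'k::field set \<Rightarrow> 'k set \<Rightarrow> bool" where
  "primary_ideal R Q \<longleftrightarrow> rideal R Q \<and> Q \<noteq> R \<and>
     (\<forall>a\<in>R. \<forall>b\<in>R. a * b \<in> Q \<longrightarrow> a \<in> Q \<or> b \<in> rad R Q)"

definition branched :: "'k::field set \<Rightarrow> 'k set \<Rightarrow> bool" where
  "branched R P \<longleftrightarrow> prime_ideal R P \<and> (\<exists>Q. primary_ideal R Q \<and> rad R Q = P \<and> Q \<noteq> P)"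

definition tRTP :: "'k::field set \<Rightarrow> bool" where
  "tRTP R \<longleftrightarrow> (\<forall>I. rideal R I \<and> I \<noteq> {0} \<longrightarrow>
     top_t R (iprod R I (colon R I)) = R \<or>
     rad R (top_t R (iprod R I (colon R I))) = top_t R (iprod R I (colon R I)))"

definition minimal_prime :: "'k::field set \<Rightarrow> 'k set \<Rightarrow> 'k set \<Rightarrow> bool" where
  "minimal_prime R I P \<longleftrightarrow> prime_ideal R P \<and> I \<subseteq> P \<and>
     (\<forall>Q. prime_ideal R Q \<and> I \<subseteq> Q \<and> Q \<subseteq> P \<longrightarrow> Q = P)"

definition minimal_t_prime :: "'k::field set \<Rightarrow> 'k set \<Rightarrow> 'k set \<Rightarrow> bool" where
  "minimal_t_prime R I P \<longleftrightarrow> t_prime R P \<and> I \<subseteq> P \<and>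
     (\<forall>Q. t_prime R Q \<and> I \<subseteq> Q \<and> Q \<subseteq> P \<longrightarrow> Q = P)"

end

theory Submission
  imports Defs
begin

(*
  A PvMD R is the intersection of its localizations R_M at t-maximal ideals M, and each R_M is a
  valuation domain. So membership questions can be decided one t-maximal ideal at a time, where
  divisibility is total. For y in M the elements x with y | x^k in R_M form the smallest prime below
  M containing y; it is a branched minimal prime of yR, and every branched t-prime is a minimal
  prime of a principal ideal.

  Condition (ii) provides, for a branched t-prime P, a finitely generated J inside P that avoids every
  t-maximal ideal not containing P. Adding to J an element z with P = rad(zR_P) gives (iii). For (iv),
  the elements that multiply a power of each generator of such a J into zR are not contained in any
  t-maximal ideal above P but in every one containing z and not P; finitely many of them already
  avoid all t-maximal ideals, and each is attached to one minimal prime of zR. For (i), if y^n lies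
  in (I I^-1)_t but y does not lie in I I^-1 R_M, then J produces an element of I^-1 forcing y into
  I I^-1 R_M. Conversely (i) or (iv) produces g in K with g outside R_P but inside R_M for all
  t-maximal M not containing P, and the ideals of denominators of g and 1/g give J.
  Conditions (v) and (vi) reduce to (iv) since a minimal t-prime of (G) is minimal over one element
  of G, namely one dividing all of G locally.
*)

section \<open>Ideals and the v- and t-operations\<close>

locale subring_of_field =
  fixes R :: "'k::field set"
  assumes sub: "is_subring R"
begin

lemma zero_in_R [simp]: "0 \<in> R"
  and one_in_R [simp]: "1 \<in> R"
  and add_in_R [intro]: "a \<in> R \<Longrightarrow> b \<in> R \<Longrightarrow> a + b \<in> R"
  and mult_in_R [intro]: "a \<in> R \<Longrightarrow> b \<in> R \<Longrightarrow> a * b \<in> R"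
  using sub unfolding is_subring_def by auto

lemma power_in_R [intro]: "a \<in> R \<Longrightarrow> a ^ n \<in> R"
  by (induction n) auto

lemma sum_in_rsubmodule: "finite F \<Longrightarrow> rsubmodule R X \<Longrightarrow> (\<And>s. s \<in> F \<Longrightarrow> f s \<in> X) \<Longrightarrow> sum f F \<in> X"
proof (induction F rule: finite_induct)
  case empty then show ?case by (simp add: rsubmodule_def)
next
  case (insert x F) then show ?case by (simp add: rsubmodule_def)
qed

lemma rspan_least: "rsubmodule R X \<Longrightarrow> S \<subseteq> X \<Longrightarrow> rspan R S \<subseteq> X"
  unfolding rspan_def
proof clarify
  fix F r assume X: "rsubmodule R X" and SX: "S \<subseteq> X" and F: "finite F" "F \<subseteq> S" "\<forall>s\<in>F. r s \<in> R"
  show "(\<Sum>s\<in>F. r s * s) \<in> X"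
    by (rule sum_in_rsubmodule[OF F(1) X]) (use X SX F in \<open>auto simp: rsubmodule_def\<close>)
qed

lemma rspan_superset: "S \<subseteq> rspan R S"
proof
  fix x assume "x \<in> S"
  then show "x \<in> rspan R S" unfolding rspan_def
    by (intro CollectI exI[of _ "{x}"] exI[of _ "\<lambda>_. 1"]) auto
qed

lemma rsubmodule_rspan: "rsubmodule R (rspan R S)"
  unfolding rsubmodule_def
proof (intro conjI ballI)
  show "0 \<in> rspan R S" unfolding rspan_def by (intro CollectI exI[of _ "{}"]) auto
next
  fix a b assume "a \<in> rspan R S" "b \<in> rspan R S"
  then obtain F1 r1 F2 r2 where 1: "finite F1" "F1 \<subseteq> S" "\<forall>s\<in>F1. r1 s \<in> R" "a = (\<Sum>s\<in>F1. r1 s * s)"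
    and 2: "finite F2" "F2 \<subseteq> S" "\<forall>s\<in>F2. r2 s \<in> R" "b = (\<Sum>s\<in>F2. r2 s * s)"
    unfolding rspan_def by blast
  define r where "r s = (if s \<in> F1 then r1 s else 0) + (if s \<in> F2 then r2 s else 0)" for s
  have "(\<Sum>s\<in>F1 \<union> F2. r s * s) = (\<Sum>s\<in>F1 \<union> F2. (if s \<in> F1 then r1 s * s else 0)) + (\<Sum>s\<in>F1 \<union> F2. (if s \<in> F2 then r2 s * s else 0))"
    unfolding sum.distrib[symmetric] by (rule sum.cong) (auto simp: r_def distrib_right)
  also have "\<dots> = a + b"
  proof -
    have f: "finite (F1 \<union> F2)" using 1 2 by auto
    have "(\<Sum>s\<in>F1 \<union> F2. (if s \<in> F1 then r1 s * s else 0)) = (\<Sum>s\<in>F1. r1 s * s)"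
      using sum.inter_restrict[OF f, of "\<lambda>s. r1 s * s" F1] by (simp add: Int_absorb1)
    moreover have "(\<Sum>s\<in>F1 \<union> F2. (if s \<in> F2 then r2 s * s else 0)) = (\<Sum>s\<in>F2. r2 s * s)"
      using sum.inter_restrict[OF f, of "\<lambda>s. r2 s * s" F2] by (simp add: Int_absorb1)
    ultimately show ?thesis using 1 2 by simp
  qed
  finally have "a + b = (\<Sum>s\<in>F1 \<union> F2. r s * s)" by simp
  moreover have "\<forall>s\<in>F1 \<union> F2. r s \<in> R" using 1 2 unfolding r_def by auto
  ultimately show "a + b \<in> rspan R S" unfolding rspan_def using 1 2
    by (intro CollectI exI[of _ "F1 \<union> F2"] exI[of _ r]) auto
next
  fix c a assume c: "c \<in> R" and "a \<in> rspan R S"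
  then obtain F r where 1: "finite F" "F \<subseteq> S" "\<forall>s\<in>F. r s \<in> R" "a = (\<Sum>s\<in>F. r s * s)"
    unfolding rspan_def by blast
  have "c * a = (\<Sum>s\<in>F. (c * r s) * s)" using 1 by (simp add: sum_distrib_left mult.assoc)
  then show "c * a \<in> rspan R S" unfolding rspan_def using 1 c
    by (intro CollectI exI[of _ F] exI[of _ "\<lambda>s. c * r s"]) auto
qed

lemma rspan_mono: "S \<subseteq> T \<Longrightarrow> rspan R S \<subseteq> rspan R T"
  by (meson rspan_superset rsubmodule_rspan rspan_least subset_trans)

lemma rsubmodule_add: "rsubmodule R X \<Longrightarrow> a \<in> X \<Longrightarrow> b \<in> X \<Longrightarrow> a + b \<in> X"
  and rsubmodule_mult: "rsubmodule R X \<Longrightarrow> r \<in> R \<Longrightarrow> a \<in> X \<Longrightarrow> r * a \<in> X"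
  and rsubmodule_zero: "rsubmodule R X \<Longrightarrow> 0 \<in> X"
  unfolding rsubmodule_def by auto

lemma rsubmodule_R: "rsubmodule R R"
  unfolding rsubmodule_def by auto

lemma rideal_rsubmodule: "rideal R I \<Longrightarrow> rsubmodule R I"
    and rideal_subset_R: "rideal R I \<Longrightarrow> I \<subseteq> R"
  unfolding rideal_def by auto

lemma rideal_add: "rideal R I \<Longrightarrow> a \<in> I \<Longrightarrow> b \<in> I \<Longrightarrow> a + b \<in> I"
  and rideal_mult_left: "rideal R I \<Longrightarrow> r \<in> R \<Longrightarrow> a \<in> I \<Longrightarrow> r * a \<in> I"
  and rideal_mult_right: "rideal R I \<Longrightarrow> r \<in> R \<Longrightarrow> a \<in> I \<Longrightarrow> a * r \<in> I"
  and rideal_zero: "rideal R I \<Longrightarrow> 0 \<in> I"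
  unfolding rideal_def rsubmodule_def by (auto simp: mult.commute)

lemma rideal_in_R: "rideal R I \<Longrightarrow> a \<in> I \<Longrightarrow> a \<in> R"
  unfolding rideal_def by auto

lemma rideal_one_eq: "rideal R I \<Longrightarrow> 1 \<in> I \<Longrightarrow> I = R"
proof (rule equalityI)
  assume I: "rideal R I" "1 \<in> I"
  show "I \<subseteq> R" using rideal_subset_R[OF I(1)] .
  show "R \<subseteq> I"
  proof
    fix r assume "r \<in> R"
    then have "r * 1 \<in> I" using rideal_mult_left[OF I(1) _ I(2)] by blast
    then show "r \<in> I" by simp
  qed
qed

lemma rideal_rspan: "S \<subseteq> R \<Longrightarrow> rideal R (rspan R S)"
  unfolding rideal_def using rsubmodule_rspan rspan_least[OF rsubmodule_R] by auto

lemma rspan_subset_rideal: "rideal R I \<Longrightarrow> S \<subseteq> I \<Longrightarrow> rspan R S \<subseteq> I"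
  using rspan_least rideal_rsubmodule by blast

lemma rspan_singleton: "rspan R {z} = {r * z | r. r \<in> R}"
proof
  have "rsubmodule R {r * z | r. r \<in> R}" unfolding rsubmodule_def
  proof (intro conjI ballI)
    show "0 \<in> {r * z | r. r \<in> R}" by (auto intro: exI[of _ 0])
  next
    fix a b assume "a \<in> {r * z | r. r \<in> R}" "b \<in> {r * z | r. r \<in> R}"
    then obtain r1 r2 where "r1 \<in> R" "r2 \<in> R" "a = r1 * z" "b = r2 * z" by auto
    then show "a + b \<in> {r * z | r. r \<in> R}"
      by (auto intro!: exI[of _ "r1 + r2"] simp: distrib_right)
  next
    fix c a assume "c \<in> R" "a \<in> {r * z | r. r \<in> R}"
    then obtain r1 where "r1 \<in> R" "a = r1 * z" by auto
    then show "c * a \<in> {r * z | r. r \<in> R}"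
      using \<open>c \<in> R\<close> by (auto intro!: exI[of _ "c * r1"] simp: mult.assoc)
  qed
  moreover have "z \<in> {r * z | r. r \<in> R}" by (auto intro: exI[of _ 1])
  ultimately show "rspan R {z} \<subseteq> {r * z | r. r \<in> R}" using rspan_least by blast
next
  show "{r * z | r. r \<in> R} \<subseteq> rspan R {z}"
    using rsubmodule_rspan[of "{z}"] rspan_superset[of "{z}"] unfolding rsubmodule_def by auto
qed

lemma rspan_finite_support: "x \<in> rspan R S \<Longrightarrow> \<exists>F. finite F \<and> F \<subseteq> S \<and> x \<in> rspan R F"
  unfolding rspan_def by blast

lemma fin_gen_rspan_singleton: "fin_gen R (rspan R {z})"
  unfolding fin_gen_def by auto

lemma rsubmodule_colon: "rsubmodule R (colon R B)"
  unfolding rsubmodule_def colon_def by (auto simp: distrib_right mult.assoc)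

lemma rsubmodule_mult_preimage: "rsubmodule R A \<Longrightarrow> rsubmodule R {b. x * b \<in> A}"
  unfolding rsubmodule_def by (auto simp: distrib_left mult.left_commute)

lemma colon_rspan: "colon R (rspan R F) = colon R F"
proof
  show "colon R (rspan R F) \<subseteq> colon R F" using rspan_superset unfolding colon_def by blast
next
  show "colon R F \<subseteq> colon R (rspan R F)"
  proof
    fix x assume "x \<in> colon R F"
    then have "F \<subseteq> {b. x * b \<in> R}" unfolding colon_def by auto
    then have "rspan R F \<subseteq> {b. x * b \<in> R}"
      using rspan_least rsubmodule_mult_preimage[OF rsubmodule_R] by blast
    then show "x \<in> colon R (rspan R F)" unfolding colon_def by auto
  qed
qed

lemma colon_antimono: "B \<subseteq> B' \<Longrightarrow> colon A B' \<subseteq> colon A B"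
  unfolding colon_def by auto

lemma vop_mono: "J \<subseteq> J' \<Longrightarrow> vop R J \<subseteq> vop R J'"
  unfolding vop_def by (rule colon_antimono, rule colon_antimono, assumption)

lemma vop_superset: "J \<subseteq> vop R J"
  unfolding vop_def colon_def by (auto simp: mult.commute)

lemma rsubmodule_vop: "rsubmodule R (vop R J)"
  unfolding vop_def by (rule rsubmodule_colon)

lemma one_in_colon: "J \<subseteq> R \<Longrightarrow> 1 \<in> colon R J"
  unfolding colon_def by auto

lemma colonD: "x \<in> colon A B \<Longrightarrow> b \<in> B \<Longrightarrow> x * b \<in> A"
  unfolding colon_def by blast

lemma colonI: "(\<And>b. b \<in> B \<Longrightarrow> x * b \<in> A) \<Longrightarrow> x \<in> colon A B"
  unfolding colon_def by blast

lemma vop_subset_R: "J \<subseteq> R \<Longrightarrow> vop R J \<subseteq> R"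
proof
  fix x assume J: "J \<subseteq> R" and x: "x \<in> vop R J"
  have "x * 1 \<in> R" using colonD[OF x[unfolded vop_def] one_in_colon[OF J]] .
  then show "x \<in> R" by simp
qed

lemma vop_idem: "vop R (vop R J) = vop R J"
proof -
  have "colon R (vop R J) = colon R J"
  proof
    show "colon R (vop R J) \<subseteq> colon R J" using vop_superset colon_antimono by blast
    show "colon R J \<subseteq> colon R (vop R J)"
      unfolding vop_def colon_def by (auto simp: mult.commute)
  qed
  then show ?thesis unfolding vop_def by simp
qed

lemma vop_rspan: "vop R (rspan R F) = vop R F"
  unfolding vop_def by (simp add: colon_rspan)

lemma mem_vop: "y \<in> vop R J \<longleftrightarrow> (\<forall>w. (\<forall>b\<in>J. w * b \<in> R) \<longrightarrow> y * w \<in> R)"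
  unfolding vop_def colon_def by auto

lemma vop_rspan_image_mult: "y \<in> vop R (rspan R G) \<Longrightarrow> x * y \<in> vop R (rspan R ((*) x ` G))"
  unfolding vop_rspan mem_vop
proof (intro allI impI)
  fix w assume H: "\<forall>w. (\<forall>b\<in>G. w * b \<in> R) \<longrightarrow> y * w \<in> R" and W: "\<forall>b\<in>(*) x ` G. w * b \<in> R"
  have "\<forall>b\<in>G. (w * x) * b \<in> R" using W by (auto simp: mult.assoc)
  then have "y * (w * x) \<in> R" using H by blast
  then show "x * y * w \<in> R" by (simp add: ac_simps)
qed

lemma mem_top_t: "x \<in> top_t R I \<longleftrightarrow> (\<exists>J. J \<subseteq> I \<and> J \<noteq> {0} \<and> fin_gen R J \<and> x \<in> vop R J)"
  unfolding top_t_def by blast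

lemma rspan_empty: "rspan R {} = {0}"
  unfolding rspan_def by auto

lemma rspan_nonzero_generator: "rspan R G \<noteq> {0} \<Longrightarrow> \<exists>g\<in>G. g \<noteq> 0"
proof (rule ccontr)
  assume a: "rspan R G \<noteq> {0}" "\<not> (\<exists>g\<in>G. g \<noteq> 0)"
  have "rsubmodule R {0}" unfolding rsubmodule_def by auto
  then have "rspan R G \<subseteq> {0}" using a(2) rspan_least by blast
  moreover have "0 \<in> rspan R G" using rsubmodule_rspan rsubmodule_zero by blast
  ultimately show False using a(1) by blast
qed

lemma rspan_neq_zero: "g \<in> G \<Longrightarrow> g \<noteq> 0 \<Longrightarrow> rspan R G \<noteq> {0}"
  using rspan_superset by blast

lemma top_t_superset: "rideal R I \<Longrightarrow> I \<noteq> {0} \<Longrightarrow> I \<subseteq> top_t R I"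
proof
  fix x assume I: "rideal R I" "I \<noteq> {0}" and x: "x \<in> I"
  obtain i where i: "i \<in> I" "i \<noteq> 0" using I rideal_zero by blast
  define g where "g = (if x = 0 then i else x)"
  have g: "g \<in> I" "g \<noteq> 0" using i x by (auto simp: g_def)
  have J: "rspan R {g} \<subseteq> I" using rspan_subset_rideal[OF I(1)] g by auto
  have Jn: "rspan R {g} \<noteq> {0}" using rspan_neq_zero[of g "{g}"] g by auto
  have "x \<in> vop R (rspan R {g})"
  proof (cases "x = 0")
    case True then show ?thesis using rsubmodule_zero[OF rsubmodule_vop] by simp
  next
    case False
    then have "x \<in> rspan R {g}" using rspan_superset g_def by auto
    then show ?thesis using vop_superset by blast
  qed
  then show "x \<in> top_t R I" unfolding mem_top_t using J Jn fin_gen_rspan_singleton by blast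
qed

lemma top_t_subset_R: "I \<subseteq> R \<Longrightarrow> top_t R I \<subseteq> R"
  unfolding top_t_def using vop_subset_R by blast

lemma fin_genD: "fin_gen R J \<Longrightarrow> \<exists>F. finite F \<and> J = rspan R F"
  unfolding fin_gen_def by auto

lemma rspan_zero: "0 \<in> rspan R F"
  using rsubmodule_zero[OF rsubmodule_rspan] .

lemma rideal_top_t:
  assumes I: "rideal R I" "I \<noteq> {0}"
  shows "rideal R (top_t R I)"
proof -
  have "rsubmodule R (top_t R I)" unfolding rsubmodule_def
  proof (intro conjI ballI)
    show "0 \<in> top_t R I" using top_t_superset[OF I] rideal_zero[OF I(1)] by (rule subsetD)
  next
    fix a b assume "a \<in> top_t R I" "b \<in> top_t R I"
    then obtain J1 J2 where 1: "J1 \<subseteq> I" "J1 \<noteq> {0}" "fin_gen R J1" "a \<in> vop R J1"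
      and 2: "J2 \<subseteq> I" "J2 \<noteq> {0}" "fin_gen R J2" "b \<in> vop R J2"
        unfolding mem_top_t by blast
    obtain F1 F2 where F: "finite F1" "J1 = rspan R F1" "finite F2" "J2 = rspan R F2"
      using 1 2 fin_genD by metis
    define J where "J = rspan R (F1 \<union> F2)"
    have s1: "J1 \<subseteq> J" and s2: "J2 \<subseteq> J" unfolding J_def F
      using rspan_mono[of F1 "F1 \<union> F2"] rspan_mono[of F2 "F1 \<union> F2"] by auto
    have "F1 \<subseteq> I" using rspan_superset[of F1] F(2) 1(1) by simp
    moreover have "F2 \<subseteq> I" using rspan_superset[of F2] F(4) 2(1) by simp
    ultimately have JI: "J \<subseteq> I" unfolding J_def using rspan_subset_rideal[OF I(1)] by simp
    have Jn: "J \<noteq> {0}" using s1 1(2) rspan_zero[of F1] F(2) by blast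
    have Jf: "fin_gen R J" unfolding J_def fin_gen_def using F by auto
    have "a \<in> vop R J" using vop_mono[OF s1] 1(4) by (rule subsetD)
    moreover have "b \<in> vop R J" using vop_mono[OF s2] 2(4) by (rule subsetD)
    ultimately have "a + b \<in> vop R J" using rsubmodule_add[OF rsubmodule_vop] by simp
    then show "a + b \<in> top_t R I" unfolding mem_top_t using JI Jn Jf by blast
  next
    fix r a assume r: "r \<in> R" and "a \<in> top_t R I"
    then obtain J where "J \<subseteq> I" "J \<noteq> {0}" "fin_gen R J" "a \<in> vop R J"
      unfolding mem_top_t by blast
    moreover then have "r * a \<in> vop R J" using rsubmodule_mult[OF rsubmodule_vop r] by simp
    ultimately show "r * a \<in> top_t R I" unfolding mem_top_t by blast
  qed
  then show ?thesis unfolding rideal_def using top_t_subset_R[OF rideal_subset_R[OF I(1)]] by simp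
qed

lemma top_t_idem:
  assumes I: "rideal R I" "I \<noteq> {0}"
  shows "top_t R (top_t R I) = top_t R I"
proof
  have T: "rideal R (top_t R I)" "top_t R I \<noteq> {0}"
    using rideal_top_t[OF I] top_t_superset[OF I] I(2) rideal_zero[OF I(1)] by blast+
  show "top_t R I \<subseteq> top_t R (top_t R I)" using top_t_superset[OF T] .
  show "top_t R (top_t R I) \<subseteq> top_t R I"
  proof
    fix y assume "y \<in> top_t R (top_t R I)"
    then obtain L where L: "L \<subseteq> top_t R I" "L \<noteq> {0}" "fin_gen R L" "y \<in> vop R L"
      unfolding mem_top_t by blast
    obtain G where G: "finite G" "L = rspan R G" using L fin_genD by blast
    have "\<forall>g\<in>G. \<exists>F. finite F \<and> rspan R F \<subseteq> I \<and> rspan R F \<noteq> {0} \<and> g \<in> vop R (rspan R F)"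
    proof
      fix g assume "g \<in> G"
      then have "g \<in> top_t R I" using L G rspan_superset by blast
      then obtain J where "J \<subseteq> I" "J \<noteq> {0}" "fin_gen R J" "g \<in> vop R J"
        unfolding mem_top_t by blast
      then show "\<exists>F. finite F \<and> rspan R F \<subseteq> I \<and> rspan R F \<noteq> {0} \<and> g \<in> vop R (rspan R F)"
        using fin_genD by metis
    qed
    then obtain F where F: "\<forall>g\<in>G. finite (F g) \<and> rspan R (F g) \<subseteq> I \<and> rspan R (F g) \<noteq> {0} \<and> g \<in> vop R (rspan R (F g))"
      by metis
    define U where "U = \<Union>(F ` G)"
    have Uf: "finite U" unfolding U_def using F G by auto
    have UI: "rspan R U \<subseteq> I" unfolding U_def
      using rspan_subset_rideal[OF I(1)] F rspan_superset by (meson UN_least subset_trans)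
    have "G \<noteq> {}" using L G rspan_empty by auto
    then obtain g0 where g0: "g0 \<in> G" by blast
    have sub: "\<And>g. g \<in> G \<Longrightarrow> rspan R (F g) \<subseteq> rspan R U"
      unfolding U_def by (intro rspan_mono) auto
    have "rspan R (F g0) \<noteq> {0}" using F g0 by blast
    then have Un: "rspan R U \<noteq> {0}" using sub[OF g0] rspan_zero[of "F g0"] by blast
    have "G \<subseteq> vop R (rspan R U)"
    proof
      fix g assume g: "g \<in> G"
      then have "g \<in> vop R (rspan R (F g))" using F by blast
      with vop_mono[OF sub[OF g]] show "g \<in> vop R (rspan R U)" by (rule subsetD)
    qed
    then have LU: "L \<subseteq> vop R (rspan R U)" using rspan_least[OF rsubmodule_vop] G(2) by simp
    have "y \<in> vop R (rspan R U)" using vop_mono[OF LU] L(4) vop_idem by auto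
    moreover have "fin_gen R (rspan R U)" using Uf fin_gen_def by auto
    ultimately show "y \<in> top_t R I" unfolding mem_top_t using UI Un by blast
  qed
qed

lemma t_ideal_top_t:
  assumes "rideal R I" "I \<noteq> {0}"
  shows "t_ideal R (top_t R I)"
  unfolding t_ideal_def using rideal_top_t[OF assms] top_t_idem[OF assms]
    top_t_superset[OF assms] assms(2) rideal_zero[OF assms(1)] by blast

lemma t_ideal_vop_subset: "t_ideal R I \<Longrightarrow> J \<subseteq> I \<Longrightarrow> J \<noteq> {0} \<Longrightarrow> fin_gen R J \<Longrightarrow> vop R J \<subseteq> I"
  unfolding t_ideal_def using mem_top_t by blast

lemma t_idealD: "t_ideal R I \<Longrightarrow> rideal R I" "t_ideal R I \<Longrightarrow> I \<noteq> {0}"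
  unfolding t_ideal_def by auto

lemma t_ideal_vop_rspan_subset:
  assumes T: "t_ideal R I" and G: "finite G" "G \<subseteq> I" "g \<in> G" "g \<noteq> 0"
  shows "vop R (rspan R G) \<subseteq> I"
proof (rule t_ideal_vop_subset[OF T])
  show "rspan R G \<subseteq> I" using rspan_subset_rideal[OF t_idealD(1)[OF T] G(2)] .
  show "rspan R G \<noteq> {0}" using rspan_neq_zero[OF G(3,4)] .
  show "fin_gen R (rspan R G)" unfolding fin_gen_def by (intro exI[of _ G]) (simp add: G(1))
qed

lemma chain_finite_subset:
  assumes "C \<in> chains A" "C \<noteq> {}" "finite F" "F \<subseteq> \<Union>C"
  shows "\<exists>N\<in>C. F \<subseteq> N"
proof -
  have "subset.chain A C" using assms(1) unfolding chains_alt_def by simp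
  then obtain N where "N \<in> C" "F \<subseteq> N"
    using finite_subset_Union_chain[of F C A] assms(2-4) by metis
  then show ?thesis by blast
qed

lemma chain_two_members:
  assumes "C \<in> chains A" "a \<in> \<Union>C" "b \<in> \<Union>C"
  shows "\<exists>N\<in>C. a \<in> N \<and> b \<in> N"
  using assms unfolding chains_def chain_subset_def by blast

lemma rideal_Union_chain:
  assumes "C \<in> chains A" "C \<noteq> {}" "\<forall>N\<in>C. rideal R N"
  shows "rideal R (\<Union>C)"
  unfolding rideal_def rsubmodule_def
proof (intro conjI ballI)
  show "0 \<in> \<Union>C" using assms rideal_zero by blast
  show "\<Union>C \<subseteq> R" using assms rideal_subset_R by blast
next
  fix a b assume "a \<in> \<Union>C" "b \<in> \<Union>C"
  then obtain N where "N \<in> C" "a \<in> N" "b \<in> N" using chain_two_members[OF assms(1)] by blast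
  then show "a + b \<in> \<Union>C" using assms rideal_add by blast
next
  fix r a assume "r \<in> R" "a \<in> \<Union>C"
  then show "r * a \<in> \<Union>C" using assms rideal_mult_left by blast
qed

lemma t_ideal_Union_chain:
  assumes C: "C \<in> chains A" "C \<noteq> {}" and t: "\<And>N. N \<in> C \<Longrightarrow> t_ideal R N"
  shows "t_ideal R (\<Union>C)"
proof -
  have U: "rideal R (\<Union>C)" using rideal_Union_chain[OF C] t t_idealD(1) by blast
  obtain N where "N \<in> C" using C(2) by blast
  then have Un: "\<Union>C \<noteq> {0}" using t[of N] t_idealD[of N] rideal_zero by blast
  have "top_t R (\<Union>C) \<subseteq> \<Union>C"
  proof
    fix x assume "x \<in> top_t R (\<Union>C)"
    then obtain J where J: "J \<subseteq> \<Union>C" "J \<noteq> {0}" "fin_gen R J" "x \<in> vop R J"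
      unfolding mem_top_t by blast
    obtain F where F: "finite F" "J = rspan R F" using J fin_genD by blast
    have "F \<subseteq> \<Union>C" using rspan_superset[of F] F(2) J(1) by simp
    then obtain N where N: "N \<in> C" "F \<subseteq> N" using chain_finite_subset[OF C F(1)] by blast
    have "J \<subseteq> N" using rspan_subset_rideal[OF t_idealD(1)[OF t[OF N(1)]] N(2)] F(2) by simp
    then have "vop R J \<subseteq> N" using t_ideal_vop_subset[OF t[OF N(1)] _ J(2) J(3)] by simp
    then show "x \<in> \<Union>C" using J(4) N(1) by blast
  qed
  then show ?thesis unfolding t_ideal_def using U Un top_t_superset[OF U Un] by simp
qed

lemma t_ideal_le_t_maximal:
  assumes I: "t_ideal R I" "I \<noteq> R" shows "\<exists>M. t_maximal R M \<and> I \<subseteq> M"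
proof -
  define A where "A = {N. t_ideal R N \<and> N \<noteq> R \<and> I \<subseteq> N}"
  have "\<forall>C\<in>chains A. \<exists>U\<in>A. \<forall>X\<in>C. X \<subseteq> U"
  proof
    fix C assume C: "C \<in> chains A"
    show "\<exists>U\<in>A. \<forall>X\<in>C. X \<subseteq> U"
    proof (cases "C = {}")
      case True then show ?thesis using I unfolding A_def by blast
    next
      case False
      have CA: "C \<subseteq> A" using C unfolding chains_def by auto
      have "t_ideal R (\<Union>C)" using t_ideal_Union_chain[OF C False] CA unfolding A_def by blast
      moreover have "\<Union>C \<noteq> R"
      proof
        assume "\<Union>C = R"
        then obtain N where N: "N \<in> C" "1 \<in> N" using one_in_R by blast
        then have "t_ideal R N" "N \<noteq> R" using CA unfolding A_def by auto
        then show False using rideal_one_eq[OF t_idealD(1) N(2)] by simp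
      qed
      moreover have "I \<subseteq> \<Union>C" using CA False unfolding A_def by blast
      ultimately show ?thesis unfolding A_def by blast
    qed
  qed
  from Zorn_Lemma2[OF this] obtain M where M: "M \<in> A" "\<forall>X\<in>A. M \<subseteq> X \<longrightarrow> X = M"
    by blast
  then have "t_maximal R M" unfolding t_maximal_def A_def by blast
  then show ?thesis using M unfolding A_def by blast
qed

section \<open>Prime and t-maximal ideals\<close>

lemma prime_idealD:
  assumes "prime_ideal R P"
  shows "rideal R P" "P \<noteq> R" "\<And>a b. a \<in> R \<Longrightarrow> b \<in> R \<Longrightarrow> a * b \<in> P \<Longrightarrow> a \<in> P \<or> b \<in> P"
  using assms unfolding prime_ideal_def by auto

lemma prime_one_notin: "prime_ideal R P \<Longrightarrow> 1 \<notin> P"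
  using prime_idealD rideal_one_eq by blast

lemma prime_zero_in: "prime_ideal R P \<Longrightarrow> 0 \<in> P"
  using prime_idealD rideal_zero by blast

lemma prime_mult_notin: "prime_ideal R P \<Longrightarrow> a \<in> R \<Longrightarrow> b \<in> R \<Longrightarrow> a \<notin> P \<Longrightarrow> b \<notin> P \<Longrightarrow> a * b \<notin> P"
  using prime_idealD by blast

lemma prime_power_imp_in:
  assumes "prime_ideal R P" "a \<in> R" "a ^ n \<in> P"
  shows "a \<in> P"
  using assms(3)
proof (induction n)
  case 0 then show ?case using prime_one_notin[OF assms(1)] by simp
next
  case (Suc n) then show ?case
    using prime_idealD(3)[OF assms(1) assms(2) power_in_R[OF assms(2)]] by auto
qed

lemma prime_power_notin: "prime_ideal R P \<Longrightarrow> a \<in> R \<Longrightarrow> a \<notin> P \<Longrightarrow> a ^ n \<notin> P"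
  using prime_power_imp_in by blast

lemma prime_in_R: "prime_ideal R P \<Longrightarrow> x \<in> P \<Longrightarrow> x \<in> R"
  using prime_idealD(1) rideal_in_R by blast

lemma t_prime_if_top_t_subset:
  assumes P: "prime_ideal R P" "P \<noteq> {0}" and top: "top_t R P \<subseteq> P"
  shows "t_prime R P"
proof -
  have "rideal R P" using prime_idealD(1)[OF P(1)] .
  then have "t_ideal R P" unfolding t_ideal_def using P(2) top top_t_superset by blast
  then show ?thesis unfolding t_prime_def using P(1) by simp
qed

lemma rideal_add_multiples:
  assumes Q: "rideal R Q" and a: "a \<in> R"
  shows "rideal R {q + r * a | q r. q \<in> Q \<and> r \<in> R}" (is "rideal R ?N")
  unfolding rideal_def rsubmodule_def
proof (intro conjI ballI)
  show "0 \<in> ?N" using Q rideal_zero by (auto intro!: exI[of _ 0])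
next
  fix x y assume "x \<in> ?N" "y \<in> ?N"
  then obtain q1 r1 q2 r2 where "q1 \<in> Q" "r1 \<in> R" "q2 \<in> Q" "r2 \<in> R" "x = q1 + r1 * a" "y = q2 + r2 * a"
    by blast
  moreover then have "x + y = (q1 + q2) + (r1 + r2) * a" by (simp add: algebra_simps)
  moreover have "q1 + q2 \<in> Q" using rideal_add[OF Q] calculation by blast
  moreover have "r1 + r2 \<in> R" using calculation by blast
  ultimately show "x + y \<in> ?N" by blast
next
  fix c x assume "c \<in> R" "x \<in> ?N"
  then obtain q1 r1 where "q1 \<in> Q" "r1 \<in> R" "x = q1 + r1 * a" by blast
  moreover then have "c * x = (c * q1) + (c * r1) * a" by (simp add: algebra_simps)
  moreover have "c * q1 \<in> Q"
    using rideal_mult_left[OF Q \<open>c \<in> R\<close>] calculation by blast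
  moreover have "c * r1 \<in> R" using calculation \<open>c \<in> R\<close> by blast
  ultimately show "c * x \<in> ?N" by blast
next
  show "?N \<subseteq> R" using Q a rideal_in_R by blast
qed

lemma rideal_add_mult:
  assumes D: "rideal R D" and g: "\<And>d. d \<in> D \<Longrightarrow> g * d \<in> R"
  shows "rideal R {d + g * d' | d d'. d \<in> D \<and> d' \<in> D}" (is "rideal R ?E")
  unfolding rideal_def rsubmodule_def
proof (intro conjI ballI)
  have "0 + g * 0 \<in> ?E" using rideal_zero[OF D] by blast
  then show "0 \<in> ?E" by simp
next
  fix a b assume "a \<in> ?E" "b \<in> ?E"
  then obtain d1 e1 d2 e2 where de: "d1 \<in> D" "e1 \<in> D" "d2 \<in> D" "e2 \<in> D"
    and ab: "a = d1 + g * e1" "b = d2 + g * e2" by blast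
  have "a + b = (d1 + d2) + g * (e1 + e2)" unfolding ab by (simp add: algebra_simps)
  moreover have "d1 + d2 \<in> D" "e1 + e2 \<in> D" using de rideal_add[OF D] by auto
  ultimately show "a + b \<in> ?E" by blast
next
  fix r a assume r: "r \<in> R" and "a \<in> ?E"
  then obtain d e where de: "d \<in> D" "e \<in> D" and a: "a = d + g * e" by blast
  have "r * a = r * d + g * (r * e)" unfolding a by (simp add: algebra_simps)
  moreover have "r * d \<in> D" "r * e \<in> D" using de rideal_mult_left[OF D r] by auto
  ultimately show "r * a \<in> ?E" by blast
next
  show "?E \<subseteq> R" using g rideal_in_R[OF D] add_in_R by blast
qed

lemma t_ideal_mult_vop:
  assumes I: "t_ideal R I" and G: "finite G" "rspan R G \<noteq> {0}"
    and b: "b \<noteq> 0" "(*) b ` G \<subseteq> I" and y: "y \<in> vop R (rspan R G)"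
  shows "b * y \<in> I"
proof -
  obtain g where g: "g \<in> G" "g \<noteq> 0" using rspan_nonzero_generator[OF G(2)] by blast
  have "vop R (rspan R ((*) b ` G)) \<subseteq> I"
    using t_ideal_vop_rspan_subset[OF I _ b(2), of "b * g"] G(1) g b(1) by auto
  then show ?thesis using vop_rspan_image_mult[OF y, of b] by blast
qed

lemma t_maximal_prime:
  assumes M: "t_maximal R M"
  shows "prime_ideal R M"
proof -
  have Mt: "t_ideal R M" "M \<noteq> R" using M unfolding t_maximal_def by auto
  have Mi: "rideal R M" "M \<noteq> {0}" using Mt t_idealD by auto
  have "a \<in> M \<or> b \<in> M" if ab: "a \<in> R" "b \<in> R" "a * b \<in> M" for a b
  proof (rule ccontr)
    assume n: "\<not> (a \<in> M \<or> b \<in> M)"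
    define N where "N = rspan R (insert a M)"
    have N: "rideal R N" "M \<subseteq> N" "a \<in> N" "N \<noteq> {0}"
      unfolding N_def using rideal_rspan[of "insert a M"] rideal_subset_R[OF Mi(1)] ab(1)
        rspan_superset[of "insert a M"] Mi(2) rideal_zero[OF Mi(1)] by auto
    have "top_t R N = R"
    proof (rule ccontr)
      assume "top_t R N \<noteq> R"
      then have "top_t R N = M"
        using M t_ideal_top_t[OF N(1,4)] top_t_superset[OF N(1,4)] N(2) unfolding t_maximal_def by blast
      then show False using top_t_superset[OF N(1,4)] N(3) n by blast
    qed
    then have "1 \<in> top_t R N" by simp
    then obtain J where J: "J \<subseteq> N" "J \<noteq> {0}" "fin_gen R J" "1 \<in> vop R J"
      unfolding mem_top_t by blast
    obtain G where G: "finite G" "J = rspan R G" using J fin_genD by blast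
    have "insert a M \<subseteq> {x. b * x \<in> M}"
      using rideal_mult_left[OF Mi(1) ab(2)] ab(3) by (auto simp: mult.commute)
    then have "N \<subseteq> {x. b * x \<in> M}"
      unfolding N_def using rspan_least[OF rsubmodule_mult_preimage[OF rideal_rsubmodule[OF Mi(1)]]]
        by blast
    then have "(*) b ` G \<subseteq> M" using rspan_superset[of G] G(2) J(1) by blast
    moreover have "b \<noteq> 0" using n rideal_zero[OF Mi(1)] by auto
    ultimately have "b * 1 \<in> M"
      using t_ideal_mult_vop[OF Mt(1) G(1), of b 1] J(2,4) unfolding G(2) by blast
    then show False using n by simp
  qed
  then show ?thesis unfolding prime_ideal_def using Mi Mt by blast
qed

lemma t_maximal_t_ideal: "t_maximal R M \<Longrightarrow> t_ideal R M"
  unfolding t_maximal_def by blast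

lemma t_maximal_rideal: "t_maximal R M \<Longrightarrow> rideal R M"
  using t_maximal_t_ideal t_idealD(1) by blast

lemma t_maximal_vop_subset:
  "t_maximal R M \<Longrightarrow> J \<subseteq> M \<Longrightarrow> J \<noteq> {0} \<Longrightarrow> fin_gen R J \<Longrightarrow> vop R J \<subseteq> M"
  using t_maximal_t_ideal t_ideal_vop_subset by blast

lemma one_in_top_t:
  assumes G: "rideal R G" "G \<noteq> {0}" and n: "\<And>M. t_maximal R M \<Longrightarrow> \<not> G \<subseteq> M"
  shows "1 \<in> top_t R G"
proof -
  have "top_t R G = R"
  proof (rule ccontr)
    assume "top_t R G \<noteq> R"
    then obtain M where "t_maximal R M" "top_t R G \<subseteq> M"
      using t_ideal_le_t_maximal[OF t_ideal_top_t[OF G]] by blast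
    then show False using n top_t_superset[OF G] by blast
  qed
  then show ?thesis by simp
qed

lemma finite_subset_not_in_t_maximal:
  assumes S: "S \<subseteq> R" and notin: "\<And>M. t_maximal R M \<Longrightarrow> \<not> S \<subseteq> M"
  obtains U where "finite U" "U \<subseteq> S" "\<And>M. t_maximal R M \<Longrightarrow> \<not> U \<subseteq> M"
proof (cases "S \<subseteq> {0}")
  case True
  have "\<not> t_maximal R M" for M
  proof
    assume M: "t_maximal R M"
    have "S \<subseteq> M" using True rideal_zero[OF t_maximal_rideal[OF M]] by blast
    then show False using notin[OF M] by blast
  qed
  then show ?thesis by (intro that[of "{}"]) auto
next
  case False
  then obtain s where s: "s \<in> S" "s \<noteq> 0" by blast
  have I: "rideal R (rspan R S)" "rspan R S \<noteq> {0}"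
    using rideal_rspan[OF S] rspan_neq_zero[OF s] by auto
  have "\<not> rspan R S \<subseteq> M" if "t_maximal R M" for M
    using notin[OF that] rspan_superset[of S] by blast
  then have "1 \<in> top_t R (rspan R S)" using one_in_top_t[OF I] by blast
  then obtain J where J: "J \<subseteq> rspan R S" "J \<noteq> {0}" "fin_gen R J" "1 \<in> vop R J"
    unfolding mem_top_t by blast
  obtain F where F: "finite F" "J = rspan R F" using J(3) fin_genD by blast
  have "F \<subseteq> rspan R S" using J(1) F(2) rspan_superset[of F] by blast
  then have "\<forall>f\<in>F. \<exists>U. finite U \<and> U \<subseteq> S \<and> f \<in> rspan R U"
    using rspan_finite_support by blast
  then obtain U where U: "\<And>f. f \<in> F \<Longrightarrow> finite (U f) \<and> U f \<subseteq> S \<and> f \<in> rspan R (U f)"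
    by metis
  show ?thesis
  proof (rule that[of "\<Union>(U ` F)"])
    show "finite (\<Union>(U ` F))" using F(1) U by blast
    show "\<Union>(U ` F) \<subseteq> S" using U by blast
  next
    fix M assume M: "t_maximal R M"
    show "\<not> \<Union>(U ` F) \<subseteq> M"
    proof
      assume UM: "\<Union>(U ` F) \<subseteq> M"
      have "F \<subseteq> M"
      proof
        fix f assume f: "f \<in> F"
        have "U f \<subseteq> M" using f UM by blast
        then show "f \<in> M" using U[OF f] rspan_subset_rideal[OF t_maximal_rideal[OF M]] by blast
      qed
      then have "J \<subseteq> M" using F(2) rspan_subset_rideal[OF t_maximal_rideal[OF M]] by simp
      then have "1 \<in> M" using t_maximal_vop_subset[OF M _ J(2,3)] J(4) by blast
      then show False using prime_one_notin[OF t_maximal_prime[OF M]] by blast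
    qed
  qed
qed

lemma prime_if_maximal_disjoint:
  assumes Q: "rideal R Q" "Q \<inter> S = {}"
    and S: "S \<subseteq> R" "1 \<in> S" "\<And>a b. a \<in> S \<Longrightarrow> b \<in> S \<Longrightarrow> a * b \<in> S"
    and max: "\<And>N. rideal R N \<Longrightarrow> Q \<subseteq> N \<Longrightarrow> N \<inter> S = {} \<Longrightarrow> N = Q"
  shows "prime_ideal R Q"
proof -
  have meets: "\<exists>s\<in>S. \<exists>q\<in>Q. \<exists>r\<in>R. s = q + r * x" if x: "x \<in> R" "x \<notin> Q" for x
  proof (rule ccontr)
    assume none: "\<not> ?thesis"
    define N where "N = {q + r * x | q r. q \<in> Q \<and> r \<in> R}"
    have "q \<in> N" if "q \<in> Q" for q
    proof -
      have "q = q + 0 * x" by simp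
      then show ?thesis unfolding N_def using that zero_in_R by blast
    qed
    moreover have "x \<in> N"
    proof -
      have "x = 0 + 1 * x" by simp
      then show ?thesis unfolding N_def using rideal_zero[OF Q(1)] one_in_R by blast
    qed
    moreover have "rideal R N" unfolding N_def using rideal_add_multiples[OF Q(1) x(1)] .
    moreover have "N \<inter> S = {}" using none unfolding N_def by blast
    ultimately show False using max[of N] x(2) by blast
  qed
  have "a \<in> Q \<or> b \<in> Q" if ab: "a \<in> R" "b \<in> R" "a * b \<in> Q" for a b
  proof (rule ccontr)
    assume "\<not> (a \<in> Q \<or> b \<in> Q)"
    then obtain s1 q1 r1 s2 q2 r2 where 1: "s1 \<in> S" "q1 \<in> Q" "r1 \<in> R" "s1 = q1 + r1 * a"
      and 2: "s2 \<in> S" "q2 \<in> Q" "r2 \<in> R" "s2 = q2 + r2 * b"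
      using meets[OF ab(1)] meets[OF ab(2)] by blast
    have e: "s1 * s2 = q1 * s2 + ((r1 * a) * q2 + (r1 * r2) * (a * b))"
      using 1 2 by (simp add: algebra_simps)
    have "q1 * s2 \<in> Q" using rideal_mult_right[OF Q(1) _ 1(2)] 2(1) S(1) by blast
    moreover have "(r1 * a) * q2 \<in> Q" using rideal_mult_left[OF Q(1) mult_in_R[OF 1(3) ab(1)] 2(2)] .
    moreover have "(r1 * r2) * (a * b) \<in> Q"
      using rideal_mult_left[OF Q(1) mult_in_R[OF 1(3) 2(3)] ab(3)] .
    ultimately have "s1 * s2 \<in> Q" unfolding e using rideal_add[OF Q(1)] by simp
    then show False using S(3)[OF 1(1) 2(1)] Q(2) by blast
  qed
  moreover have "Q \<noteq> R" using Q(2) S(1,2) by blast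
  ultimately show ?thesis unfolding prime_ideal_def using Q(1) by blast
qed

lemma prime_ideal_disjoint_mult_closed:
  assumes I: "rideal R I" and S: "S \<subseteq> R" "1 \<in> S" "\<And>a b. a \<in> S \<Longrightarrow> b \<in> S \<Longrightarrow> a * b \<in> S"
    and d: "I \<inter> S = {}"
  shows "\<exists>Q. prime_ideal R Q \<and> I \<subseteq> Q \<and> Q \<inter> S = {}"
proof -
  define A where "A = {N. rideal R N \<and> I \<subseteq> N \<and> N \<inter> S = {}}"
  have "\<forall>C\<in>chains A. \<exists>U\<in>A. \<forall>X\<in>C. X \<subseteq> U"
  proof
    fix C assume C: "C \<in> chains A"
    show "\<exists>U\<in>A. \<forall>X\<in>C. X \<subseteq> U"
    proof (cases "C = {}")
      case True then show ?thesis using I d unfolding A_def by blast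
    next
      case False
      have CA: "C \<subseteq> A" using C unfolding chains_def by auto
      have "rideal R (\<Union>C)" using rideal_Union_chain[OF C False] CA unfolding A_def by auto
      moreover have "I \<subseteq> \<Union>C" "\<Union>C \<inter> S = {}"
        using CA False unfolding A_def by blast+
      ultimately show ?thesis unfolding A_def by blast
    qed
  qed
  from Zorn_Lemma2[OF this] obtain Q where Q: "Q \<in> A" "\<forall>X\<in>A. Q \<subseteq> X \<longrightarrow> X = Q"
    by blast
  have Qi: "rideal R Q" "I \<subseteq> Q" "Q \<inter> S = {}" using Q(1) unfolding A_def by auto
  have "prime_ideal R Q"
    by (rule prime_if_maximal_disjoint[OF Qi(1,3) S]) (use Q(2) Qi(2) in \<open>auto simp: A_def\<close>)
  then show ?thesis using Qi by blast
qed

lemma minimal_primeD: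
  assumes "minimal_prime R I P"
  shows "prime_ideal R P" "I \<subseteq> P" "\<And>Q. prime_ideal R Q \<Longrightarrow> I \<subseteq> Q \<Longrightarrow> Q \<subseteq> P \<Longrightarrow> Q = P"
  using assms unfolding minimal_prime_def by auto

lemma minimal_primeI:
  assumes "prime_ideal R P" "I \<subseteq> P" "\<And>Q. prime_ideal R Q \<Longrightarrow> I \<subseteq> Q \<Longrightarrow> Q \<subseteq> P \<Longrightarrow> Q = P"
  shows "minimal_prime R I P"
  using assms unfolding minimal_prime_def by auto

lemma minimal_prime_mult_power:
  assumes mp: "minimal_prime R I P" and I: "rideal R I" and x: "x \<in> P"
  shows "\<exists>s\<in>R. s \<notin> P \<and> (\<exists>k. s * x ^ k \<in> I)"
proof (rule ccontr)
  assume n: "\<not> ?thesis"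
  have P: "prime_ideal R P" "I \<subseteq> P" using mp unfolding minimal_prime_def by auto
  have xR: "x \<in> R" using P x prime_in_R by blast
  define S where "S = {s * x ^ k | s k. s \<in> R \<and> s \<notin> P}"
  have Sm: "s * x ^ k \<in> S" if "s \<in> R" "s \<notin> P" for s k unfolding S_def using that by blast
  have "S \<subseteq> R" unfolding S_def using xR by auto
  moreover have "1 \<in> S" using Sm[of 1 0] prime_one_notin[OF P(1)] by simp
  moreover have "a * b \<in> S" if ab0: "a \<in> S" "b \<in> S" for a b
  proof -
    obtain s1 k1 s2 k2 where ab: "a = s1 * x ^ k1" "b = s2 * x ^ k2" "s1 \<in> R" "s1 \<notin> P" "s2 \<in> R" "s2 \<notin> P"
      using ab0 unfolding S_def by blast
    have "a * b = (s1 * s2) * x ^ (k1 + k2)" unfolding ab by (simp add: power_add ac_simps)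
    moreover have "s1 * s2 \<in> R" "s1 * s2 \<notin> P" using ab prime_mult_notin[OF P(1)] by auto
    ultimately show ?thesis using Sm by simp
  qed
  moreover have "I \<inter> S = {}" using n unfolding S_def by blast
  ultimately obtain Q where Q: "prime_ideal R Q" "I \<subseteq> Q" "Q \<inter> S = {}"
    using prime_ideal_disjoint_mult_closed[OF I] by metis
  have "Q \<subseteq> P"
  proof
    fix q assume q: "q \<in> Q"
    show "q \<in> P"
    proof (rule ccontr)
      assume "q \<notin> P"
      then have "q * x ^ 0 \<in> S" using Sm prime_in_R[OF Q(1) q] by blast
      then show False using q Q(3) by auto
    qed
  qed
  then have "Q = P" using minimal_primeD(3)[OF mp Q(1) Q(2)] by simp
  moreover have "1 * x ^ 1 \<in> S" using Sm[of 1 1] prime_one_notin[OF P(1)] by simp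
  ultimately show False using x Q(3) by auto
qed

section \<open>Divisibility in localizations\<close>

(* loc_dvd P b a says that a lies in b R_P, and in_loc P x that x lies in R_P. *)
definition loc_dvd :: "'k set \<Rightarrow> 'k \<Rightarrow> 'k \<Rightarrow> bool" where
  "loc_dvd P b a \<longleftrightarrow> (\<exists>s\<in>R. s \<notin> P \<and> (\<exists>r\<in>R. s * a = r * b))"

definition in_loc :: "'k set \<Rightarrow> 'k \<Rightarrow> bool" where
  "in_loc P x \<longleftrightarrow> (\<exists>s\<in>R. s \<notin> P \<and> s * x \<in> R)"

lemma loc_dvdI: "s \<in> R \<Longrightarrow> s \<notin> P \<Longrightarrow> r \<in> R \<Longrightarrow> s * a = r * b \<Longrightarrow> loc_dvd P b a"
  unfolding loc_dvd_def by blast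

lemma loc_dvdE:
  assumes "loc_dvd P b a" obtains s r where "s \<in> R" "s \<notin> P" "r \<in> R" "s * a = r * b"
  using assms unfolding loc_dvd_def by blast

lemma in_locI: "s \<in> R \<Longrightarrow> s \<notin> P \<Longrightarrow> s * x \<in> R \<Longrightarrow> in_loc P x"
  unfolding in_loc_def by blast

lemma in_locE:
  assumes "in_loc P x" obtains s where "s \<in> R" "s \<notin> P" "s * x \<in> R"
  using assms unfolding in_loc_def by blast

lemma loc_dvd_refl: "prime_ideal R P \<Longrightarrow> loc_dvd P a a"
  using prime_one_notin by (intro loc_dvdI[of 1 _ 1]) auto

lemma loc_dvd_unit: "b \<in> R \<Longrightarrow> b \<notin> P \<Longrightarrow> a \<in> R \<Longrightarrow> loc_dvd P b a"
  by (rule loc_dvdI[of b P a a b]) (simp_all add: mult.commute)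

lemma loc_dvd_zero: "prime_ideal R P \<Longrightarrow> loc_dvd P b 0"
  using prime_one_notin by (intro loc_dvdI[of 1 _ 0]) auto

lemma loc_dvd_trans:
  assumes P: "prime_ideal R P" and 1: "loc_dvd P a b" and 2: "loc_dvd P b c"
  shows "loc_dvd P a c"
proof -
  obtain s1 r1 where a: "s1 \<in> R" "s1 \<notin> P" "r1 \<in> R" "s1 * b = r1 * a"
    using 1 by (rule loc_dvdE)
  obtain s2 r2 where b: "s2 \<in> R" "s2 \<notin> P" "r2 \<in> R" "s2 * c = r2 * b"
    using 2 by (rule loc_dvdE)
  have "(s2 * s1) * c = (r2 * r1) * a"
  proof -
    have "(s2 * s1) * c = s1 * (s2 * c)" by (simp add: ac_simps)
    also have "\<dots> = r2 * (s1 * b)" using b(4) by (simp add: ac_simps)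
    also have "\<dots> = (r2 * r1) * a" using a(4) by (simp add: ac_simps)
    finally show ?thesis .
  qed
  moreover have "s2 * s1 \<notin> P" using prime_mult_notin[OF P b(1) a(1) b(2) a(2)] .
  ultimately show ?thesis using a b by (intro loc_dvdI[of "s2 * s1" _ "r2 * r1"]) auto
qed

lemma loc_dvd_add:
  assumes P: "prime_ideal R P" and 1: "loc_dvd P a b" and 2: "loc_dvd P a c"
  shows "loc_dvd P a (b + c)"
proof -
  obtain s1 r1 where a: "s1 \<in> R" "s1 \<notin> P" "r1 \<in> R" "s1 * b = r1 * a"
    using 1 by (rule loc_dvdE)
  obtain s2 r2 where b: "s2 \<in> R" "s2 \<notin> P" "r2 \<in> R" "s2 * c = r2 * a"
    using 2 by (rule loc_dvdE)
  have "(s1 * s2) * (b + c) = (s2 * r1 + s1 * r2) * a"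
  proof -
    have "(s1 * s2) * (b + c) = s2 * (s1 * b) + s1 * (s2 * c)" by (simp add: algebra_simps)
    also have "\<dots> = (s2 * r1 + s1 * r2) * a" using a(4) b(4) by (simp add: algebra_simps)
    finally show ?thesis .
  qed
  moreover have "s1 * s2 \<notin> P" using prime_mult_notin[OF P a(1) b(1) a(2) b(2)] .
  ultimately show ?thesis using a b by (intro loc_dvdI[of "s1 * s2" _ "s2 * r1 + s1 * r2"]) auto
qed

lemma loc_dvd_mult:
  assumes "r \<in> R" "loc_dvd P a b"
  shows "loc_dvd P a (r * b)"
proof -
  obtain s1 r1 where a: "s1 \<in> R" "s1 \<notin> P" "r1 \<in> R" "s1 * b = r1 * a"
    using assms(2) by (rule loc_dvdE)
  have "s1 * (r * b) = (r * r1) * a" using a(4) by (metis mult.assoc mult.left_commute)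
  then show ?thesis using a assms(1) by (intro loc_dvdI[of s1 _ "r * r1"]) auto
qed

lemma loc_dvd_mult_both:
  assumes "loc_dvd P a b"
  shows "loc_dvd P (c * a) (c * b)"
proof -
  obtain s1 r1 where a: "s1 \<in> R" "s1 \<notin> P" "r1 \<in> R" "s1 * b = r1 * a"
    using assms by (rule loc_dvdE)
  have "s1 * (c * b) = r1 * (c * a)" using a(4) by (metis mult.assoc mult.left_commute)
  then show ?thesis using a by (intro loc_dvdI[of s1 _ r1]) auto
qed

lemma loc_dvd_zero_left:
  assumes P: "prime_ideal R P" and d: "loc_dvd P 0 x"
  shows "x = 0"
proof -
  obtain s r where sr: "s \<in> R" "s \<notin> P" "s * x = r * 0" using d by (rule loc_dvdE)
  moreover have "s \<noteq> 0" using sr(2) prime_zero_in[OF P] by auto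
  ultimately show "x = 0" by simp
qed

lemma loc_dvd_cancel_unit:
  assumes P: "prime_ideal R P" and s: "s \<in> R" "s \<notin> P" and d: "loc_dvd P a (s * x)"
  shows "loc_dvd P a x"
proof -
  obtain u r where ur: "u \<in> R" "u \<notin> P" "r \<in> R" "u * (s * x) = r * a"
    using d by (rule loc_dvdE)
  have "(u * s) * x = r * a" using ur(4) by (simp add: mult.assoc)
  moreover have "u * s \<notin> P" using prime_mult_notin[OF P ur(1) s(1) ur(2) s(2)] .
  ultimately show ?thesis using ur(1,3) s(1) by (intro loc_dvdI[of "u * s" P r]) auto
qed

lemma loc_dvd_power:
  assumes P: "prime_ideal R P" and d: "loc_dvd P a b"
  shows "loc_dvd P (a ^ k) (b ^ k)"
proof (induction k)
  case 0 then show ?case using loc_dvd_refl[OF P] by simp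
next
  case (Suc k)
  obtain s1 r1 where a: "s1 \<in> R" "s1 \<notin> P" "r1 \<in> R" "s1 * b = r1 * a"
    using d by (rule loc_dvdE)
  obtain s2 r2 where b: "s2 \<in> R" "s2 \<notin> P" "r2 \<in> R" "s2 * b ^ k = r2 * a ^ k"
    using Suc by (rule loc_dvdE)
  have "(s1 * s2) * b ^ Suc k = (r1 * r2) * a ^ Suc k"
  proof -
    have "(s1 * s2) * b ^ Suc k = (s1 * b) * (s2 * b ^ k)" by (simp add: ac_simps)
    also have "\<dots> = (r1 * r2) * a ^ Suc k" using a(4) b(4) by (simp add: ac_simps)
    finally show ?thesis .
  qed
  moreover have "s1 * s2 \<notin> P" using prime_mult_notin[OF P a(1) b(1) a(2) b(2)] .
  ultimately show ?case using a b by (intro loc_dvdI[of "s1 * s2" _ "r1 * r2"]) auto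
qed

lemma loc_dvd_antimono:
  assumes "P \<subseteq> M" "loc_dvd M a b"
  shows "loc_dvd P a b"
  using assms unfolding loc_dvd_def by blast

lemma loc_dvd_rideal:
  assumes "rideal R I" "loc_dvd P g y" "g \<in> I"
  shows "\<exists>s\<in>R. s \<notin> P \<and> s * y \<in> I"
proof -
  obtain s1 r1 where a: "s1 \<in> R" "s1 \<notin> P" "r1 \<in> R" "s1 * y = r1 * g"
    using assms(2) by (rule loc_dvdE)
  have "r1 * g \<in> I" using rideal_mult_left[OF assms(1) a(3) assms(3)] .
  then show ?thesis using a by auto
qed

lemma rsubmodule_loc_dvd:
  assumes P: "prime_ideal R P"
  shows "rsubmodule R {x. loc_dvd P a x}"
  unfolding rsubmodule_def using loc_dvd_zero[OF P] loc_dvd_add[OF P] loc_dvd_mult by auto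

lemma loc_dvd_rspan: "prime_ideal R P \<Longrightarrow> (\<forall>g\<in>G. loc_dvd P a g) \<Longrightarrow> x \<in> rspan R G \<Longrightarrow> loc_dvd P a x"
  using rspan_least[OF rsubmodule_loc_dvd, of P G a] by blast

lemma common_unit_outside:
  assumes P: "prime_ideal R P" and G: "finite G" and ex: "\<forall>g\<in>G. \<exists>s\<in>R. s \<notin> P \<and> \<Phi> s g"
    and up: "\<And>s t g. \<Phi> s g \<Longrightarrow> t \<in> R \<Longrightarrow> \<Phi> (t * s) g"
  shows "\<exists>s\<in>R. s \<notin> P \<and> (\<forall>g\<in>G. \<Phi> s g)"
  using G ex
proof (induction G rule: finite_induct)
  case empty then show ?case using prime_one_notin[OF P] by auto
next
  case (insert g G)
  obtain s0 where s0: "s0 \<in> R" "s0 \<notin> P" "\<forall>h\<in>G. \<Phi> s0 h" using insert by auto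
  obtain s1 where s1: "s1 \<in> R" "s1 \<notin> P" "\<Phi> s1 g" using insert by auto
  have "\<forall>h\<in>insert g G. \<Phi> (s1 * s0) h"
  proof
    fix h assume "h \<in> insert g G"
    then show "\<Phi> (s1 * s0) h"
    proof
      assume "h = g" then show ?thesis using up[OF s1(3) s0(1)] by (simp add: mult.commute)
    next
      assume "h \<in> G" then show ?thesis using up[of s0 h s1] s0 s1 by simp
    qed
  qed
  moreover have "s1 * s0 \<notin> P" using prime_mult_notin[OF P s1(1) s0(1) s1(2) s0(2)] .
  ultimately show ?case using s0 s1 by blast
qed

lemma common_unit_loc_dvd:
  assumes P: "prime_ideal R P" and G: "finite G" and dvd: "\<And>g. g \<in> G \<Longrightarrow> loc_dvd P a (f g)"
  shows "\<exists>d\<in>R. d \<notin> P \<and> (\<forall>g\<in>G. \<exists>r\<in>R. d * f g = r * a)"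
proof (rule common_unit_outside[OF P G])
  show "\<forall>g\<in>G. \<exists>d\<in>R. d \<notin> P \<and> (\<exists>r\<in>R. d * f g = r * a)"
    using dvd by (blast elim: loc_dvdE)
next
  fix d t g assume "\<exists>r\<in>R. d * f g = r * a" and t: "t \<in> R"
  then obtain r where r: "r \<in> R" "d * f g = r * a" by blast
  then have "(t * d) * f g = (t * r) * a" by (simp add: mult.assoc)
  then show "\<exists>r\<in>R. (t * d) * f g = r * a" using r(1) t by blast
qed

lemma common_unit_loc_dvd_powers:
  assumes P: "prime_ideal R P" and G: "finite G" and dvd: "\<And>g. g \<in> G \<Longrightarrow> \<exists>k. loc_dvd P a (g ^ k)"
  shows "\<exists>d\<in>R. d \<notin> P \<and> (\<forall>g\<in>G. \<exists>e. \<exists>r\<in>R. d * g ^ e = r * a)"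
proof -
  have "\<forall>g\<in>G. \<exists>k. loc_dvd P a (g ^ k)" using dvd by blast
  then obtain k where k: "\<forall>g\<in>G. loc_dvd P a (g ^ k g)" by (auto dest!: bchoice)
  have "\<exists>d\<in>R. d \<notin> P \<and> (\<forall>g\<in>G. \<exists>r\<in>R. d * g ^ k g = r * a)"
    using common_unit_loc_dvd[OF P G, of a "\<lambda>g. g ^ k g"] k by blast
  then show ?thesis by blast
qed

lemma in_loc_R: "prime_ideal R P \<Longrightarrow> x \<in> R \<Longrightarrow> in_loc P x"
  using prime_one_notin by (intro in_locI[of 1]) auto

lemma in_loc_mult:
  assumes P: "prime_ideal R P" and "in_loc P x" "in_loc P y"
  shows "in_loc P (x * y)"
proof -
  obtain s where s: "s \<in> R" "s \<notin> P" "s * x \<in> R" using assms(2) by (rule in_locE)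
  obtain t where t: "t \<in> R" "t \<notin> P" "t * y \<in> R" using assms(3) by (rule in_locE)
  have e: "(s * t) * (x * y) = (s * x) * (t * y)" by (simp add: ac_simps)
  have "(s * t) * (x * y) \<in> R" unfolding e by (rule mult_in_R[OF s(3) t(3)])
  then show ?thesis using prime_mult_notin[OF P s(1) t(1) s(2) t(2)] s t
    by (intro in_locI[of "s * t"]) auto
qed

definition loc_extension :: "'k set \<Rightarrow> 'k set \<Rightarrow> 'k set" where
  "loc_extension P Q = {x. \<exists>s\<in>R. s \<notin> P \<and> s * x \<in> Q}"

lemma rsubmodule_loc_extension:
  assumes P: "prime_ideal R P" and Q: "rideal R Q"
  shows "rsubmodule R (loc_extension P Q)"
  unfolding rsubmodule_def loc_extension_def
proof (intro conjI ballI)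
  show "0 \<in> {x. \<exists>s\<in>R. s \<notin> P \<and> s * x \<in> Q}"
    using prime_one_notin[OF P] rideal_zero[OF Q] by force
next
  fix x y assume "x \<in> {x. \<exists>s\<in>R. s \<notin> P \<and> s * x \<in> Q}" "y \<in> {x. \<exists>s\<in>R. s \<notin> P \<and> s * x \<in> Q}"
  then obtain s1 s2 where s: "s1 \<in> R" "s1 \<notin> P" "s1 * x \<in> Q" "s2 \<in> R" "s2 \<notin> P" "s2 * y \<in> Q"
    by blast
  have "(s1 * s2) * (x + y) = s2 * (s1 * x) + s1 * (s2 * y)" by (simp add: algebra_simps)
  then have "(s1 * s2) * (x + y) \<in> Q"
    using rideal_add[OF Q rideal_mult_left[OF Q s(4) s(3)] rideal_mult_left[OF Q s(1) s(6)]] by simp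
  moreover have "s1 * s2 \<notin> P" using prime_mult_notin[OF P s(1) s(4) s(2) s(5)] .
  ultimately show "x + y \<in> {x. \<exists>s\<in>R. s \<notin> P \<and> s * x \<in> Q}" using s by blast
next
  fix r x assume r: "r \<in> R" and "x \<in> {x. \<exists>s\<in>R. s \<notin> P \<and> s * x \<in> Q}"
  then obtain s where s: "s \<in> R" "s \<notin> P" "s * x \<in> Q" by blast
  have "s * (r * x) \<in> Q" using rideal_mult_left[OF Q r s(3)] by (simp add: ac_simps)
  then show "r * x \<in> {x. \<exists>s\<in>R. s \<notin> P \<and> s * x \<in> Q}" using s by blast
qed

lemma rideal_conductor:
  assumes A: "rsubmodule R A"
  shows "rideal R {d \<in> R. d * x \<in> A}"
  unfolding rideal_def rsubmodule_def
proof (intro conjI ballI)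
  show "0 \<in> {d \<in> R. d * x \<in> A}" using rsubmodule_zero[OF A] by simp
next
  fix a b assume "a \<in> {d \<in> R. d * x \<in> A}" "b \<in> {d \<in> R. d * x \<in> A}"
  then have "a \<in> R" "b \<in> R" "a * x \<in> A" "b * x \<in> A" by auto
  then show "a + b \<in> {d \<in> R. d * x \<in> A}"
    using rsubmodule_add[OF A] add_in_R by (simp add: distrib_right)
next
  fix r a assume "r \<in> R" "a \<in> {d \<in> R. d * x \<in> A}"
  then have "r \<in> R" "a \<in> R" "a * x \<in> A" by auto
  then show "r * a \<in> {d \<in> R. d * x \<in> A}"
    using rsubmodule_mult[OF A] mult_in_R by (simp add: mult.assoc)
qed auto

lemma common_exponent:
  assumes G: "finite G" and ex: "\<forall>g\<in>G. \<exists>n::nat. \<Phi> n g" and up: "\<And>n m g. g \<in> G \<Longrightarrow> \<Phi> n g \<Longrightarrow> n \<le> m \<Longrightarrow> \<Phi> m g"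
  shows "\<exists>N. \<forall>g\<in>G. \<Phi> N g"
proof -
  have "\<forall>H. H \<subseteq> G \<longrightarrow> (\<exists>N. \<forall>g\<in>H. \<Phi> N g)"
  proof (intro allI impI)
    fix H assume "H \<subseteq> G"
    have "finite H" using G \<open>H \<subseteq> G\<close> finite_subset by blast
    then show "\<exists>N. \<forall>g\<in>H. \<Phi> N g" using \<open>H \<subseteq> G\<close>
    proof (induction H rule: finite_induct)
      case empty then show ?case by auto
    next
      case (insert g H)
      obtain n0 where n0: "\<forall>h\<in>H. \<Phi> n0 h" using insert by auto
      obtain n1 where n1: "\<Phi> n1 g" using insert ex by auto
      have "\<forall>h\<in>insert g H. \<Phi> (n0 + n1) h"
      proof
        fix h assume h: "h \<in> insert g H"
        then have hG: "h \<in> G" using insert by blast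
        from h show "\<Phi> (n0 + n1) h"
        proof
          assume "h = g" then show ?thesis using up[OF hG _ le_add2] n1 by simp
        next
          assume "h \<in> H" then show ?thesis using up[OF hG _ le_add1] n0 by blast
        qed
      qed
      then show ?case by blast
    qed
  qed
  then show ?thesis by blast
qed

end

section \<open>Localizations of a PvMD\<close>

locale pvmd = subring_of_field R for R :: "'k::field set" +
  assumes qf: "has_quotient_field R" and pv: "PvMD R"
begin

lemma t_maximal_loc_dvd_total:
  assumes M: "t_maximal R M" and ab: "a \<in> R" "b \<in> R"
  shows "loc_dvd M a b \<or> loc_dvd M b a"
proof -
  have P: "prime_ideal R M" using t_maximal_prime[OF M] .
  have z: "s \<notin> M \<Longrightarrow> s \<noteq> 0" for s using prime_zero_in[OF P] by auto
  show ?thesis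
  proof (cases "a = 0 \<or> b = 0")
    case True then show ?thesis using loc_dvd_zero[OF P] by auto
  next
    case False
    then have x0: "b / a \<noteq> 0" by simp
    have V: "valuation_domain (localization R M)" using pv M unfolding PvMD_def by blast
    then have "b / a \<in> localization R M \<or> inverse (b / a) \<in> localization R M"
      unfolding valuation_domain_def using x0 by blast
    then show ?thesis
    proof
      assume "b / a \<in> localization R M"
      then obtain c s where cs: "c \<in> R" "s \<in> R" "s \<notin> M" "b / a = c / s"
        unfolding localization_def by blast
      then have "s * b = c * a" using False z[OF cs(3)] by (simp add: field_simps)
      then show ?thesis using cs by (intro disjI1 loc_dvdI[of s _ c]) auto
    next
      assume "inverse (b / a) \<in> localization R M"
      then obtain c s where cs: "c \<in> R" "s \<in> R" "s \<notin> M" "a / b = c / s"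
        unfolding localization_def by auto
      then have "s * a = c * b" using False z[OF cs(3)] by (simp add: field_simps)
      then show ?thesis using cs by (intro disjI2 loc_dvdI[of s _ c]) auto
    qed
  qed
qed

definition under_t_maximal :: "'k set \<Rightarrow> bool" where
  "under_t_maximal P \<longleftrightarrow> prime_ideal R P \<and> (\<exists>M. t_maximal R M \<and> P \<subseteq> M)"

lemma t_maximal_under_t_maximal: "t_maximal R M \<Longrightarrow> under_t_maximal M"
  unfolding under_t_maximal_def using t_maximal_prime by blast

lemma under_t_maximal_prime: "under_t_maximal P \<Longrightarrow> prime_ideal R P"
  unfolding under_t_maximal_def by blast

lemma loc_dvd_total:
  assumes "under_t_maximal P" "a \<in> R" "b \<in> R"
  shows "loc_dvd P a b \<or> loc_dvd P b a"
proof -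
  obtain M where "t_maximal R M" "P \<subseteq> M" using assms(1) unfolding under_t_maximal_def by blast
  then show ?thesis using t_maximal_loc_dvd_total[OF _ assms(2,3)] loc_dvd_antimono by blast
qed

lemma in_loc_or_inverse:
  assumes P: "under_t_maximal P" and x: "x \<noteq> 0"
  shows "in_loc P x \<or> in_loc P (inverse x)"
proof -
  obtain a b where ab: "a \<in> R" "b \<in> R" "b \<noteq> 0" "x = a / b"
    using qf unfolding has_quotient_field_def by blast
  have a0: "a \<noteq> 0" using ab x by auto
  have Pp: "prime_ideal R P" using under_t_maximal_prime[OF P] .
  have z: "s \<notin> P \<Longrightarrow> s \<noteq> 0" for s using prime_zero_in[OF Pp] by auto
  from loc_dvd_total[OF P ab(1,2)] show ?thesis
  proof
    assume "loc_dvd P a b"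
    then obtain s r where sr: "s \<in> R" "s \<notin> P" "r \<in> R" "s * b = r * a" by (rule loc_dvdE)
    have "inverse x = b / a" using ab(4) by simp
    then have "s * inverse x = (s * b) / a" by simp
    also have "\<dots> = r" using sr(4) a0 by simp
    finally have "s * inverse x = r" .
    then show ?thesis using sr by (intro disjI2 in_locI[of s]) auto
  next
    assume "loc_dvd P b a"
    then obtain s r where sr: "s \<in> R" "s \<notin> P" "r \<in> R" "s * a = r * b" by (rule loc_dvdE)
    have "s * x = (s * a) / b" using ab(4) by simp
    also have "\<dots> = r" using sr(4) ab(3) by simp
    finally have "s * x = r" .
    then show ?thesis using sr by (intro disjI1 in_locI[of s]) auto
  qed
qed

lemma in_loc_div_outside:
  assumes P: "prime_ideal R P"
    and M: "t_maximal R M" "P \<subseteq> M" and p: "p \<in> P" and s: "s \<in> R" "s \<notin> P"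
  shows "in_loc M (p / s)"
proof -
  have pR: "p \<in> R" using prime_in_R[OF P p] .
  have s0: "s \<noteq> 0" using s prime_zero_in[OF P] by auto
  from t_maximal_loc_dvd_total[OF M(1) s(1) pR] show ?thesis
  proof
    assume "loc_dvd M s p"
    then obtain t r where tr: "t \<in> R" "t \<notin> M" "r \<in> R" "t * p = r * s" by (rule loc_dvdE)
    then have "t * (p / s) = r" using s0 by (simp add: field_simps)
    then show ?thesis using tr by (intro in_locI[of t]) auto
  next
    assume "loc_dvd M p s"
    then obtain t r where tr: "t \<in> R" "t \<notin> M" "r \<in> R" "t * s = r * p" by (rule loc_dvdE)
    have "r * p \<in> P" using rideal_mult_left[OF prime_idealD(1)[OF P] tr(3) p] .
    moreover have "t \<notin> P" using tr(2) M(2) by blast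
    ultimately show ?thesis using prime_mult_notin[OF P tr(1) s(1) _ s(2)] tr(4) by simp
  qed
qed

lemma loc_dvd_least:
  assumes P: "under_t_maximal P" and G: "finite G" "G \<noteq> {}" "G \<subseteq> R"
  shows "\<exists>g\<in>G. \<forall>h\<in>G. loc_dvd P g h"
  using G
proof (induction G rule: finite_ne_induct)
  case (singleton x) then show ?case using loc_dvd_refl[OF under_t_maximal_prime[OF P]] by auto
next
  case (insert x F)
  obtain g where g: "g \<in> F" "\<forall>h\<in>F. loc_dvd P g h" using insert by auto
  have gx: "g \<in> R" "x \<in> R" using insert g by auto
  from loc_dvd_total[OF P gx] show ?case
  proof
    assume "loc_dvd P g x" then show ?thesis using g by auto
  next
    assume "loc_dvd P x g" then show ?thesis
      using g loc_dvd_trans[OF under_t_maximal_prime[OF P]] loc_dvd_refl[OF under_t_maximal_prime[OF P]]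
        by auto
  qed
qed

lemma loc_dvd_least_nonzero:
  assumes P: "under_t_maximal P" and G: "finite G" "G \<subseteq> R" "rspan R G \<noteq> {0}"
  obtains g where "g \<in> G" "g \<noteq> 0" "\<And>h. h \<in> G \<Longrightarrow> loc_dvd P g h"
proof -
  have "G \<noteq> {}" using G(3) rspan_empty by auto
  then obtain g where g: "g \<in> G" "\<forall>h\<in>G. loc_dvd P g h"
    using loc_dvd_least[OF P G(1)] G(2) by blast
  have "g \<noteq> 0"
  proof
    assume "g = 0"
    then have "G \<subseteq> {0}" using g(2) loc_dvd_zero_left[OF under_t_maximal_prime[OF P]] by blast
    then show False using rspan_nonzero_generator[OF G(3)] by blast
  qed
  then show ?thesis using that g by blast
qed

lemma vop_loc_dvd_generator:
  assumes M: "t_maximal R M" and G: "finite G" "G \<subseteq> R" "rspan R G \<noteq> {0}"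
    and y: "y \<in> vop R (rspan R G)"
  shows "\<exists>g\<in>G. loc_dvd M g y"
proof -
  have P: "prime_ideal R M" using t_maximal_prime[OF M] .
  obtain g where g: "g \<in> G" "g \<noteq> 0" "\<And>h. h \<in> G \<Longrightarrow> loc_dvd M g h"
    using loc_dvd_least_nonzero[OF t_maximal_under_t_maximal[OF M] G] by blast
  have "\<exists>s\<in>R. s \<notin> M \<and> (\<forall>h\<in>G. \<exists>r\<in>R. s * h = r * g)"
    by (rule common_unit_loc_dvd[OF P G(1), of g "\<lambda>h. h"]) (rule g(3))
  then obtain s where s: "s \<in> R" "s \<notin> M" "\<forall>h\<in>G. \<exists>r\<in>R. s * h = r * g"
    by blast
  have "s / g \<in> colon R (rspan R G)"
    unfolding colon_rspan
  proof (rule colonI)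
    fix h assume "h \<in> G"
    then obtain r where "r \<in> R" "s * h = r * g" using s by blast
    then show "s / g * h \<in> R" using g(2) by (simp add: field_simps)
  qed
  then have "y * (s / g) \<in> R" using y unfolding vop_def colon_def by blast
  moreover have "s * y = (y * (s / g)) * g" using g(2) by (simp add: field_simps)
  ultimately show ?thesis using g(1) s(1,2) by (intro bexI[of _ g] loc_dvdI[of s _ "y * (s / g)"]) auto
qed

lemma top_t_locally_in:
  assumes M: "t_maximal R M" and I: "rideal R I" and y: "y \<in> top_t R I"
  shows "\<exists>s\<in>R. s \<notin> M \<and> s * y \<in> I"
proof -
  obtain J where J: "J \<subseteq> I" "J \<noteq> {0}" "fin_gen R J" "y \<in> vop R J"
    using y unfolding mem_top_t by blast
  obtain G where G: "finite G" "J = rspan R G" using J fin_genD by blast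
  have GI: "G \<subseteq> I" using rspan_superset[of G] G(2) J(1) by simp
  then have GR: "G \<subseteq> R" using rideal_subset_R[OF I] by simp
  obtain g where g: "g \<in> G" "loc_dvd M g y" using vop_loc_dvd_generator[OF M G(1) GR] J G by auto
  show ?thesis using loc_dvd_rideal[OF I g(2)] g(1) GI by blast
qed

lemma in_loc_all_t_maximal:
  assumes a: "\<forall>M. t_maximal R M \<longrightarrow> in_loc M x"
  shows "x \<in> R"
proof -
  obtain a b where ab: "a \<in> R" "b \<in> R" "b \<noteq> 0" "x = a / b"
    using qf unfolding has_quotient_field_def by blast
  define D where "D = {d \<in> R. d * x \<in> R}"
  have D: "rideal R D" unfolding D_def using rideal_conductor[OF rsubmodule_R] .
  have "b * x = a" using ab by simp
  then have "b \<in> D" unfolding D_def using ab by simp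
  then have Dn: "D \<noteq> {0}" using ab by blast
  have "\<forall>M. t_maximal R M \<longrightarrow> \<not> D \<subseteq> M"
  proof (intro allI impI)
    fix M assume "t_maximal R M"
    then obtain s where "s \<in> R" "s \<notin> M" "s * x \<in> R" using a by (meson in_locE)
    then show "\<not> D \<subseteq> M" unfolding D_def by blast
  qed
  then have "1 \<in> top_t R D" using one_in_top_t[OF D Dn] by blast
  then obtain J where J: "J \<subseteq> D" "1 \<in> vop R J" unfolding mem_top_t by blast
  have "x \<in> colon R J"
  proof (rule colonI)
    fix j assume "j \<in> J" then have "j * x \<in> R" using J unfolding D_def by blast
    then show "x * j \<in> R" by (simp add: mult.commute)
  qed
  then have "1 * x \<in> R" using colonD[OF J(2)[unfolded vop_def]] by blast
  then show ?thesis by simp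
qed

lemma vop_if_loc_dvd_generator:
  assumes "\<And>M. t_maximal R M \<Longrightarrow> \<exists>g\<in>G. loc_dvd M g x"
  shows "x \<in> vop R (rspan R G)"
  unfolding vop_rspan mem_vop
proof (intro allI impI)
  fix w assume w: "\<forall>b\<in>G. w * b \<in> R"
  have "in_loc M (x * w)" if M: "t_maximal R M" for M
  proof -
    obtain g s r where gsr: "g \<in> G" "s \<in> R" "s \<notin> M" "r \<in> R" "s * x = r * g"
      using assms[OF M] by (blast elim: loc_dvdE)
    have "s * (x * w) = (s * x) * w" by (simp add: mult.assoc)
    also have "\<dots> = r * (w * g)" using gsr(5) by (simp add: ac_simps)
    finally have eq: "s * (x * w) = r * (w * g)" .
    have "r * (w * g) \<in> R" using w gsr(1,4) by blast
    then have "s * (x * w) \<in> R" by (simp only: eq)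
    then show ?thesis by (rule in_locI[OF gsr(2,3)])
  qed
  then show "x * w \<in> R" using in_loc_all_t_maximal by blast
qed

lemma t_ideal_locally_in:
  assumes I: "t_ideal R I"
    and x: "x \<in> R" and a: "\<forall>M. t_maximal R M \<longrightarrow> (\<exists>s\<in>R. s \<notin> M \<and> s * x \<in> I)"
  shows "x \<in> I"
proof (cases "x = 0")
  case True then show ?thesis using rideal_zero[OF t_idealD(1)[OF I]] by simp
next
  case False
  have Ii: "rideal R I" "I \<noteq> {0}" using t_idealD[OF I] by auto
  define D where "D = {d \<in> R. d * x \<in> I}"
  have D: "rideal R D" unfolding D_def using rideal_conductor[OF rideal_rsubmodule[OF Ii(1)]] .
  obtain i where i: "i \<in> I" "i \<noteq> 0" using Ii rideal_zero by blast
  have "i * x \<in> I" using rideal_mult_right[OF Ii(1) x i(1)] .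
  then have "i \<in> D" unfolding D_def using rideal_in_R[OF Ii(1) i(1)] by simp
  then have Dn: "D \<noteq> {0}" using i by blast
  have "\<forall>M. t_maximal R M \<longrightarrow> \<not> D \<subseteq> M"
  proof (intro allI impI)
    fix M assume "t_maximal R M"
    then obtain s where "s \<in> R" "s \<notin> M" "s * x \<in> I" using a by blast
    then show "\<not> D \<subseteq> M" unfolding D_def by blast
  qed
  then have "1 \<in> top_t R D" using one_in_top_t[OF D Dn] by blast
  then obtain J where J: "J \<subseteq> D" "J \<noteq> {0}" "fin_gen R J" "1 \<in> vop R J"
    unfolding mem_top_t by blast
  obtain G where G: "finite G" "J = rspan R G" using J fin_genD by blast
  have "(*) x ` G \<subseteq> I"
    using rspan_superset[of G] G(2) J(1) unfolding D_def by (auto simp: mult.commute)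
  then have "x * 1 \<in> I" using t_ideal_mult_vop[OF I G(1) _ False] J(2,4) unfolding G(2) by blast
  then show ?thesis by simp
qed

lemma prime_under_t_maximal_t_prime:
  assumes P: "prime_ideal R P" "P \<noteq> {0}" and M: "t_maximal R M" "P \<subseteq> M"
  shows "t_prime R P"
proof (rule t_prime_if_top_t_subset[OF P])
  have Pi: "rideal R P" using prime_idealD(1)[OF P(1)] .
  show "top_t R P \<subseteq> P"
  proof
    fix y assume y: "y \<in> top_t R P"
    obtain s where s: "s \<in> R" "s \<notin> M" "s * y \<in> P"
      using top_t_locally_in[OF M(1) Pi y] by blast
    have "y \<in> R" using top_t_subset_R[OF rideal_subset_R[OF Pi]] y by blast
    then show "y \<in> P" using prime_idealD(3)[OF P(1) s(1) _ s(3)] s(2) M(2) by blast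
  qed
qed

lemma primes_under_t_maximal_chain:
  assumes M: "t_maximal R M" and P: "prime_ideal R P1" "prime_ideal R P2" "P1 \<subseteq> M" "P2 \<subseteq> M"
  shows "P1 \<subseteq> P2 \<or> P2 \<subseteq> P1"
proof (rule ccontr)
  assume "\<not> ?thesis"
  then obtain a b where ab: "a \<in> P1" "a \<notin> P2" "b \<in> P2" "b \<notin> P1" by blast
  have aR: "a \<in> R" "b \<in> R" using ab prime_in_R P by auto
  from t_maximal_loc_dvd_total[OF M aR] show False
  proof
    assume "loc_dvd M a b"
    then obtain s r where sr: "s \<in> R" "s \<notin> M" "r \<in> R" "s * b = r * a" by (rule loc_dvdE)
    have "r * a \<in> P1" using rideal_mult_left[OF prime_idealD(1)[OF P(1)] sr(3) ab(1)] .
    then show False using prime_idealD(3)[OF P(1) sr(1) aR(2)] sr ab P(3) by auto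
  next
    assume "loc_dvd M b a"
    then obtain s r where sr: "s \<in> R" "s \<notin> M" "r \<in> R" "s * a = r * b" by (rule loc_dvdE)
    have "r * b \<in> P2" using rideal_mult_left[OF prime_idealD(1)[OF P(2)] sr(3) ab(3)] .
    then show False using prime_idealD(3)[OF P(2) sr(1) aR(1)] sr ab P(4) by auto
  qed
qed

section \<open>Minimal primes and branched primes\<close>

(* The smallest prime below M containing y (see loc_radical_least). *)
definition loc_radical :: "'k set \<Rightarrow> 'k \<Rightarrow> 'k set" where
  "loc_radical M y = {x \<in> R. \<exists>k. loc_dvd M y (x ^ k)}"

lemma rideal_loc_radical:
  assumes M: "t_maximal R M" shows "rideal R (loc_radical M y)"
  unfolding rideal_def rsubmodule_def
proof (intro conjI ballI)
  have P: "prime_ideal R M" using t_maximal_prime[OF M] .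
  have "loc_dvd M y (0 ^ 1)" using loc_dvd_zero[OF P, of y] by simp
  then show "0 \<in> loc_radical M y" unfolding loc_radical_def using zero_in_R by blast
next
  have P: "prime_ideal R M" using t_maximal_prime[OF M] .
  fix a b assume "a \<in> loc_radical M y" "b \<in> loc_radical M y"
  then obtain k l where ab: "a \<in> R" "b \<in> R" "loc_dvd M y (a ^ k)" "loc_dvd M y (b ^ l)"
    unfolding loc_radical_def by blast
  from t_maximal_loc_dvd_total[OF M ab(1,2)] have "loc_dvd M y ((a + b) ^ k) \<or> loc_dvd M y ((a + b) ^ l)"
  proof
    assume "loc_dvd M a b"
    then have "loc_dvd M (a ^ k) ((a + b) ^ k)"
      using loc_dvd_add[OF P loc_dvd_refl[OF P]] loc_dvd_power[OF P] by blast
    then show ?thesis using loc_dvd_trans[OF P ab(3)] by blast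
  next
    assume "loc_dvd M b a"
    then have "loc_dvd M (b ^ l) ((a + b) ^ l)"
      using loc_dvd_add[OF P _ loc_dvd_refl[OF P]] loc_dvd_power[OF P] by blast
    then show ?thesis using loc_dvd_trans[OF P ab(4)] by blast
  qed
  then show "a + b \<in> loc_radical M y" unfolding loc_radical_def using ab by blast
next
  fix r a assume r: "r \<in> R" and "a \<in> loc_radical M y"
  then obtain k where a: "a \<in> R" "loc_dvd M y (a ^ k)" unfolding loc_radical_def by blast
  have "loc_dvd M y (r ^ k * a ^ k)" using loc_dvd_mult[OF power_in_R[OF r] a(2)] .
  then show "r * a \<in> loc_radical M y" unfolding loc_radical_def
    using a r by (auto simp: power_mult_distrib)
qed (auto simp: loc_radical_def)

lemma loc_radical_least:
  assumes Q: "prime_ideal R Q" "Q \<subseteq> M" "y \<in> Q"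
  shows "loc_radical M y \<subseteq> Q"
proof
  fix x assume "x \<in> loc_radical M y"
  then obtain k s r where x: "x \<in> R" and sr: "s \<in> R" "s \<notin> M" "r \<in> R" "s * x ^ k = r * y"
    unfolding loc_radical_def by (blast elim: loc_dvdE)
  have "s * x ^ k \<in> Q" unfolding sr(4)
    using rideal_mult_left[OF prime_idealD(1)[OF Q(1)] sr(3) Q(3)] .
  then have "x ^ k \<in> Q" using prime_idealD(3)[OF Q(1) sr(1) power_in_R[OF x]] sr(2) Q(2) by blast
  then show "x \<in> Q" using prime_power_imp_in[OF Q(1) x] by blast
qed

lemma loc_radical_subset: "t_maximal R M \<Longrightarrow> y \<in> M \<Longrightarrow> loc_radical M y \<subseteq> M"
  using loc_radical_least[OF t_maximal_prime] by blast

lemma loc_radical_in: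
  assumes "t_maximal R M" "y \<in> R"
  shows "y \<in> loc_radical M y"
proof -
  have "loc_dvd M y (y ^ 1)" using loc_dvd_refl[OF t_maximal_prime[OF assms(1)]] by simp
  then show ?thesis unfolding loc_radical_def using assms(2) by blast
qed

lemma prime_loc_radical:
  assumes M: "t_maximal R M" and y: "y \<in> M"
  shows "prime_ideal R (loc_radical M y)"
  unfolding prime_ideal_def
proof (intro conjI ballI impI)
  have P: "prime_ideal R M" using t_maximal_prime[OF M] .
  show "rideal R (loc_radical M y)" using rideal_loc_radical[OF M] .
  show "loc_radical M y \<noteq> R"
    using loc_radical_subset[OF M y] prime_one_notin[OF P] one_in_R by blast
next
  have P: "prime_ideal R M" using t_maximal_prime[OF M] .
  fix a b assume ab: "a \<in> R" "b \<in> R" "a * b \<in> loc_radical M y"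
  then obtain k where k: "loc_dvd M y ((a * b) ^ k)" unfolding loc_radical_def by blast
  have sq: "loc_dvd M y (c ^ (2 * k))" if "loc_dvd M (a * b) (c * c)" for c
  proof -
    have "loc_dvd M ((a * b) ^ k) ((c * c) ^ k)" using loc_dvd_power[OF P that] .
    then have "loc_dvd M y ((c * c) ^ k)" using loc_dvd_trans[OF P k] by blast
    then show ?thesis by (simp add: power_mult power2_eq_square)
  qed
  from t_maximal_loc_dvd_total[OF M ab(1,2)] show "a \<in> loc_radical M y \<or> b \<in> loc_radical M y"
  proof
    assume "loc_dvd M a b"
    then have "loc_dvd M (a * b) (b * b)" using loc_dvd_mult_both[of M a b b] by (simp add: mult.commute)
    then show ?thesis unfolding loc_radical_def using sq ab(2) by blast
  next
    assume "loc_dvd M b a"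
    then have "loc_dvd M (a * b) (a * a)" using loc_dvd_mult_both[of M b a a] by (simp add: mult.commute)
    then show ?thesis unfolding loc_radical_def using sq ab(1) by blast
  qed
qed

lemma vop_principal:
  assumes z: "z \<in> R" "z \<noteq> 0"
  shows "vop R (rspan R {z}) = rspan R {z}"
proof
  show "rspan R {z} \<subseteq> vop R (rspan R {z})" using vop_superset .
  show "vop R (rspan R {z}) \<subseteq> rspan R {z}"
  proof
    fix y assume y: "y \<in> vop R (rspan R {z})"
    have "1 / z \<in> colon R (rspan R {z})" unfolding colon_rspan
      by (rule colonI) (use z in simp)
    then have "y * (1 / z) \<in> R" using colonD[OF y[unfolded vop_def]] by blast
    moreover have "y = (y * (1 / z)) * z" using z by simp
    ultimately show "y \<in> rspan R {z}" unfolding rspan_singleton by blast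
  qed
qed

lemma t_ideal_principal:
  assumes z: "z \<in> R" "z \<noteq> 0"
  shows "t_ideal R (rspan R {z})"
proof -
  have i: "rideal R (rspan R {z})" using rideal_rspan z by simp
  have n: "rspan R {z} \<noteq> {0}" using rspan_neq_zero[of z "{z}"] z by simp
  have "top_t R (rspan R {z}) \<subseteq> rspan R {z}"
  proof
    fix y assume "y \<in> top_t R (rspan R {z})"
    then obtain J where "J \<subseteq> rspan R {z}" "y \<in> vop R J" unfolding mem_top_t by blast
    then show "y \<in> rspan R {z}" using vop_mono vop_principal[OF z] by blast
  qed
  then show ?thesis unfolding t_ideal_def using i n top_t_superset[OF i n] by simp
qed

lemma minimal_prime_mult_power_uniform:
  assumes mp: "minimal_prime R I P" and I: "rideal R I" and G: "finite G" "G \<subseteq> P"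
  shows "\<exists>s\<in>R. s \<notin> P \<and> (\<exists>K. \<forall>g\<in>G. s * g ^ K \<in> I)"
proof -
  have P: "prime_ideal R P" using minimal_primeD(1)[OF mp] .
  have "\<exists>s\<in>R. s \<notin> P \<and> (\<forall>g\<in>G. \<exists>k. s * g ^ k \<in> I)"
  proof (rule common_unit_outside[OF P G(1)])
    show "\<forall>g\<in>G. \<exists>s\<in>R. s \<notin> P \<and> (\<exists>k. s * g ^ k \<in> I)"
      using minimal_prime_mult_power[OF mp I] G(2) by blast
  next
    fix s t g assume "\<exists>k. s * g ^ k \<in> I" and t: "t \<in> R"
    then obtain k where "s * g ^ k \<in> I" by blast
    then have "t * (s * g ^ k) \<in> I" using rideal_mult_left[OF I t] by blast
    then show "\<exists>k. (t * s) * g ^ k \<in> I" by (auto simp: mult.assoc)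
  qed
  then obtain s where s: "s \<in> R" "s \<notin> P" "\<forall>g\<in>G. \<exists>k. s * g ^ k \<in> I"
    by blast
  have "\<exists>K. \<forall>g\<in>G. s * g ^ K \<in> I"
  proof (rule common_exponent[OF G(1) s(3)])
    fix n m g assume g: "g \<in> G" and n: "s * g ^ n \<in> I" and nm: "n \<le> m"
    have gR: "g \<in> R" using G(2) g prime_in_R[OF P] by blast
    have "g ^ m = g ^ (m - n) * g ^ n" using nm by (simp add: power_add[symmetric])
    then have "s * g ^ m = g ^ (m - n) * (s * g ^ n)" by (simp add: ac_simps)
    then show "s * g ^ m \<in> I" using rideal_mult_left[OF I power_in_R[OF gR] n] by (simp only:)
  qed
  then show ?thesis using s(1,2) by blast
qed

lemma t_ideal_mult_power_vop:
  assumes I: "t_ideal R I" and G: "finite G" "G \<subseteq> R" "rspan R G \<noteq> {0}"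
    and y: "y \<in> R" "y \<in> vop R (rspan R G)" and s: "s \<in> R" "\<forall>g\<in>G. s * g ^ K \<in> I"
  shows "s * y ^ K \<in> I"
proof (rule t_ideal_locally_in[OF I])
  show "s * y ^ K \<in> R" using s(1) y(1) by blast
  show "\<forall>M. t_maximal R M \<longrightarrow> (\<exists>t\<in>R. t \<notin> M \<and> t * (s * y ^ K) \<in> I)"
  proof (intro allI impI)
    fix M assume M: "t_maximal R M"
    obtain g where g: "g \<in> G" "loc_dvd M g y" using vop_loc_dvd_generator[OF M G y(2)] by blast
    obtain t r where tr: "t \<in> R" "t \<notin> M" "r \<in> R" "t * y = r * g"
      using g(2) by (rule loc_dvdE)
    have "t ^ K * (s * y ^ K) = s * (t * y) ^ K" by (simp add: power_mult_distrib ac_simps)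
    also have "\<dots> = r ^ K * (s * g ^ K)" using tr(4) by (simp add: power_mult_distrib ac_simps)
    also have "\<dots> \<in> I"
      using rideal_mult_left[OF t_idealD(1)[OF I] power_in_R[OF tr(3)]] s(2) g(1) by blast
    finally have "t ^ K * (s * y ^ K) \<in> I" .
    moreover have "t ^ K \<notin> M" using prime_power_notin[OF t_maximal_prime[OF M] tr(1,2)] .
    ultimately show "\<exists>t\<in>R. t \<notin> M \<and> t * (s * y ^ K) \<in> I"
      using power_in_R[OF tr(1)] by blast
  qed
qed

lemma minimal_prime_t_prime:
  assumes mp: "minimal_prime R I P" and I: "t_ideal R I"
  shows "t_prime R P"
proof (rule t_prime_if_top_t_subset)
  have P: "prime_ideal R P" "I \<subseteq> P" using minimal_primeD[OF mp] by auto
  then show "prime_ideal R P" "P \<noteq> {0}"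
    using t_idealD[OF I] rideal_zero[OF t_idealD(1)[OF I]] by auto
  show "top_t R P \<subseteq> P"
  proof
    fix y assume y: "y \<in> top_t R P"
    have yR: "y \<in> R" using top_t_subset_R[OF rideal_subset_R[OF prime_idealD(1)[OF P(1)]]] y by blast
    obtain J where J: "J \<subseteq> P" "J \<noteq> {0}" "fin_gen R J" "y \<in> vop R J"
      using y unfolding mem_top_t by blast
    obtain G where G: "finite G" "J = rspan R G" using J fin_genD by blast
    have GP: "G \<subseteq> P" using rspan_superset[of G] G(2) J(1) by simp
    obtain s K where s: "s \<in> R" "s \<notin> P" "\<forall>g\<in>G. s * g ^ K \<in> I"
      using minimal_prime_mult_power_uniform[OF mp t_idealD(1)[OF I] G(1) GP] by blast
    have "s * y ^ K \<in> I"
      using t_ideal_mult_power_vop[OF I G(1) _ _ yR _ s(1,3)] GP prime_in_R[OF P(1)] J(2,4) G(2) by blast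
    then have "s * y ^ K \<in> P" using P(2) by blast
    then have "y ^ K \<in> P" using prime_idealD(3)[OF P(1) s(1) power_in_R[OF yR]] s(2) by blast
    then show "y \<in> P" using prime_power_imp_in[OF P(1) yR] by blast
  qed
qed

lemma loc_dvd_power_Suc:
  assumes P: "prime_ideal R P"
    and y: "y \<in> P" and d: "loc_dvd P z (y ^ k)" and M: "t_maximal R M" "P \<subseteq> M"
  shows "loc_dvd M z (y ^ Suc k)"
proof -
  obtain s r where sr: "s \<in> R" "s \<notin> P" "r \<in> R" "s * y ^ k = r * z"
    using d by (rule loc_dvdE)
  obtain u where u: "u \<in> R" "u \<notin> M" "u * (y / s) \<in> R"
    using in_loc_div_outside[OF P M y sr(1,2)] by (rule in_locE)
  have s0: "s \<noteq> 0" using sr prime_zero_in[OF P] by auto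
  have "u * y ^ Suc k = (u * (y / s) * r) * z"
  proof -
    have "u * y ^ Suc k = (u * (y / s)) * (s * y ^ k)" using s0 by (simp add: field_simps)
    also have "\<dots> = (u * (y / s) * r) * z" using sr(4) by (simp add: ac_simps)
    finally show ?thesis .
  qed
  moreover have "u * (y / s) * r \<in> R" using mult_in_R[OF u(3) sr(3)] .
  ultimately show ?thesis using u(1,2) by (intro loc_dvdI[of u _ "u * (y / s) * r"])
qed

lemma radI: "x \<in> R \<Longrightarrow> x ^ n \<in> X \<Longrightarrow> x \<in> rad R X"
  unfolding rad_def by blast

lemma radE:
  assumes "x \<in> rad R X" obtains n where "x \<in> R" "x ^ n \<in> X"
  using assms unfolding rad_def by blast

definition loc_multiples :: "'k set \<Rightarrow> 'k \<Rightarrow> 'k set" where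
  "loc_multiples P a = {x \<in> R. loc_dvd P a x}"

lemma rideal_loc_multiples: "prime_ideal R P \<Longrightarrow> rideal R (loc_multiples P a)"
  unfolding rideal_def rsubmodule_def loc_multiples_def
  using loc_dvd_zero loc_dvd_add loc_dvd_mult by auto

lemma loc_multiples_subset:
  assumes P: "prime_ideal R P" and a: "a \<in> P" shows "loc_multiples P a \<subseteq> P"
proof
  fix x assume "x \<in> loc_multiples P a"
  then obtain s r where x: "x \<in> R" and sr: "s \<in> R" "s \<notin> P" "r \<in> R" "s * x = r * a"
    unfolding loc_multiples_def by (blast elim: loc_dvdE)
  have "s * x \<in> P" unfolding sr(4) using rideal_mult_left[OF prime_idealD(1)[OF P] sr(3) a] .
  then show "x \<in> P" using prime_idealD(3)[OF P sr(1) x] sr(2) by blast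
qed

lemma loc_multiples_cancel:
  assumes P: "prime_ideal R P" and x: "x \<in> R" and b: "b \<in> R" "b \<notin> P"
    and xb: "x * b \<in> loc_multiples P a"
  shows "x \<in> loc_multiples P a"
proof -
  obtain s r where sr: "s \<in> R" "s \<notin> P" "r \<in> R" "s * (x * b) = r * a"
    using xb unfolding loc_multiples_def by (blast elim: loc_dvdE)
  have "(s * b) * x = r * a" using sr(4) by (simp add: ac_simps)
  moreover have "s * b \<notin> P" using prime_mult_notin[OF P sr(1) b(1) sr(2) b(2)] .
  ultimately show ?thesis unfolding loc_multiples_def using x sr(1,3) b(1)
    by (blast intro: loc_dvdI[of "s * b" P r])
qed

lemma branched_if_loc_dvd_powers:
  assumes P: "prime_ideal R P" and z: "z \<in> P" "z \<noteq> 0"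
    and dvd: "\<forall>x\<in>P. \<exists>k. loc_dvd P z (x ^ k)"
  shows "branched R P"
proof -
  define Q where "Q = loc_multiples P (z * z)"
  have zR: "z \<in> R" using prime_in_R[OF P z(1)] .
  have Qi: "rideal R Q" unfolding Q_def using rideal_loc_multiples[OF P] .
  have QP: "Q \<subseteq> P"
    unfolding Q_def using loc_multiples_subset[OF P rideal_mult_left[OF prime_idealD(1)[OF P] zR z(1)]] .
  have rQ: "rad R Q = P"
  proof
    show "rad R Q \<subseteq> P" using QP prime_power_imp_in[OF P] unfolding rad_def by blast
    show "P \<subseteq> rad R Q"
    proof
      fix x assume x: "x \<in> P"
      then obtain k where "loc_dvd P z (x ^ k)" using dvd by blast
      then have "loc_dvd P (z * z) ((x ^ k) * (x ^ k))" using loc_dvd_power[OF P, of z "x ^ k" 2]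
        by (simp add: power2_eq_square)
      then have "loc_dvd P (z * z) (x ^ (k * 2))" by (simp add: power_mult power2_eq_square)
      moreover have "x ^ (k * 2) \<in> R" using prime_in_R[OF P x] by blast
      ultimately have "x ^ (k * 2) \<in> Q" unfolding Q_def loc_multiples_def by blast
      then show "x \<in> rad R Q" using radI prime_in_R[OF P x] by blast
    qed
  qed
  have "primary_ideal R Q" unfolding primary_ideal_def
  proof (intro conjI ballI impI)
    show "rideal R Q" using Qi .
    show "Q \<noteq> R" using QP prime_idealD(2)[OF P] rideal_subset_R[OF prime_idealD(1)[OF P]] by blast
  next
    fix a b assume ab: "a \<in> R" "b \<in> R" "a * b \<in> Q"
    then show "a \<in> Q \<or> b \<in> rad R Q"
      using loc_multiples_cancel[OF P ab(1,2)] rQ unfolding Q_def by blast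
  qed
  moreover have "z \<notin> Q"
  proof
    assume "z \<in> Q"
    then obtain s r where sr: "s \<in> R" "s \<notin> P" "r \<in> R" "s * z = r * (z * z)"
      unfolding Q_def loc_multiples_def by (blast elim: loc_dvdE)
    then have "s = r * z" using z(2) by (simp add: algebra_simps)
    then show False using rideal_mult_left[OF prime_idealD(1)[OF P] sr(3) z(1)] sr(2) by simp
  qed
  ultimately show ?thesis unfolding branched_def using P rQ z(1) by blast
qed

lemma principal_ideal:
  assumes z: "z \<in> R" "z \<noteq> 0"
  shows "rideal R (rspan R {z})" "fin_gen R (rspan R {z})" "rspan R {z} \<noteq> {0}" "z \<in> rspan R {z}"
  using rideal_rspan[of "{z}"] z fin_gen_rspan_singleton rspan_neq_zero[of z "{z}"] rspan_superset[of "{z}"]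
    by auto

lemma principal_subset: "rideal R Q \<Longrightarrow> z \<in> Q \<Longrightarrow> rspan R {z} \<subseteq> Q"
  using rspan_subset_rideal by simp

lemma minimal_prime_principal_t_prime:
  assumes z: "z \<in> R" "z \<noteq> 0" and mp: "minimal_prime R (rspan R {z}) P"
  shows "t_prime R P"
  using minimal_prime_t_prime[OF mp t_ideal_principal[OF z]] .

lemma minimal_prime_principal_loc_dvd_power:
  assumes z: "z \<in> R" "z \<noteq> 0" and mp: "minimal_prime R (rspan R {z}) P" and x: "x \<in> P"
  shows "\<exists>k. loc_dvd P z (x ^ k)"
proof -
  obtain s k where s: "s \<in> R" "s \<notin> P" "s * x ^ k \<in> rspan R {z}"
    using minimal_prime_mult_power[OF mp principal_ideal(1)[OF z] x] by blast
  then obtain r where "r \<in> R" "s * x ^ k = r * z" unfolding rspan_singleton by blast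
  then show ?thesis using s by (intro exI[of _ k] loc_dvdI[of s _ r]) auto
qed

lemma minimal_primes_under_t_maximal_eq:
  assumes M: "t_maximal R M" and mp: "minimal_prime R I P1" "minimal_prime R I P2"
  and sub: "P1 \<subseteq> M" "P2 \<subseteq> M" shows "P1 = P2"
proof -
  have p: "prime_ideal R P1" "prime_ideal R P2" "I \<subseteq> P1" "I \<subseteq> P2"
    using minimal_primeD mp by auto
  from primes_under_t_maximal_chain[OF M p(1,2) sub] show ?thesis
  proof
    assume "P1 \<subseteq> P2" then show ?thesis using minimal_primeD(3)[OF mp(2) p(1) p(3)] by simp
  next
    assume "P2 \<subseteq> P1" then show ?thesis using minimal_primeD(3)[OF mp(1) p(2) p(4)] by simp
  qed
qed

lemma loc_radical_minimal_prime:
  assumes M: "t_maximal R M" and z: "z \<in> M"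
  shows "minimal_prime R (rspan R {z}) (loc_radical M z)"
proof (rule minimal_primeI)
  show P: "prime_ideal R (loc_radical M z)" using prime_loc_radical[OF M z] .
  have "z \<in> loc_radical M z" using loc_radical_in[OF M rideal_in_R[OF t_maximal_rideal[OF M] z]] .
  then show "rspan R {z} \<subseteq> loc_radical M z"
    using principal_subset[OF prime_idealD(1)[OF P]] by blast
next
  fix Q assume Q: "prime_ideal R Q" "rspan R {z} \<subseteq> Q" "Q \<subseteq> loc_radical M z"
  have "z \<in> Q" using Q(2) rspan_superset by blast
  then have "loc_radical M z \<subseteq> Q"
    using loc_radical_least[OF Q(1)] Q(3) loc_radical_subset[OF M z] by blast
  then show "Q = loc_radical M z" using Q(3) by blast
qed

lemma minimal_prime_principal_if_loc_dvd_powers: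
  assumes P: "prime_ideal R P" and z: "z \<in> P" and dvd: "\<And>y. y \<in> P \<Longrightarrow> \<exists>k. loc_dvd P z (y ^ k)"
  shows "minimal_prime R (rspan R {z}) P"
proof (rule minimal_primeI[OF P])
  show "rspan R {z} \<subseteq> P" using principal_subset[OF prime_idealD(1)[OF P] z] .
next
  fix Q assume Q: "prime_ideal R Q" "rspan R {z} \<subseteq> Q" "Q \<subseteq> P"
  have zQ: "z \<in> Q" using Q(2) rspan_superset by blast
  have "P \<subseteq> Q"
  proof
    fix y assume y: "y \<in> P"
    have yR: "y \<in> R" using prime_in_R[OF P y] .
    obtain k s r where sr: "s \<in> R" "s \<notin> P" "r \<in> R" "s * y ^ k = r * z"
      using dvd[OF y] by (blast elim: loc_dvdE)
    have "s * y ^ k \<in> Q" using sr(4) rideal_mult_left[OF prime_idealD(1)[OF Q(1)] sr(3) zQ] by simp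
    moreover have "s \<notin> Q" using sr(2) Q(3) by blast
    ultimately have "y ^ k \<in> Q" using prime_idealD(3)[OF Q(1) sr(1) power_in_R[OF yR]] by blast
    then show "y \<in> Q" using prime_power_imp_in[OF Q(1) yR] by blast
  qed
  then show "Q = P" using Q(3) by blast
qed

lemma minimal_prime_principal_branched:
  assumes z: "z \<in> R" "z \<noteq> 0" and mp: "minimal_prime R (rspan R {z}) P"
  shows "branched R P"
proof -
  have "z \<in> P" using minimal_primeD(2)[OF mp] rspan_superset by blast
  then show ?thesis
    using branched_if_loc_dvd_powers[OF minimal_primeD(1)[OF mp] _ z(2)]
      minimal_prime_principal_loc_dvd_power[OF z mp] by blast
qed

section \<open>Isolating ideals\<close>

(* The ideals J asked for in condition (ii). *)
definition isolating_ideal :: "'k set \<Rightarrow> 'k set \<Rightarrow> bool" where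
  "isolating_ideal P J \<longleftrightarrow> rideal R J \<and> fin_gen R J \<and> J \<subseteq> P \<and>
     (\<forall>M. t_maximal R M \<and> \<not> P \<subseteq> M \<longrightarrow> \<not> J \<subseteq> M)"

lemma isolating_idealE:
  assumes "isolating_ideal P J"
  obtains G where "finite G" "G \<subseteq> P" "J = rspan R G"
    "\<And>M. t_maximal R M \<Longrightarrow> \<not> P \<subseteq> M \<Longrightarrow> \<exists>g\<in>G. g \<notin> M"
proof -
  obtain G where G: "finite G" "J = rspan R G"
    using assms fin_genD unfolding isolating_ideal_def by blast
  have "G \<subseteq> P" using assms rspan_superset[of G] G(2) unfolding isolating_ideal_def by blast
  moreover have "\<exists>g\<in>G. g \<notin> M" if "t_maximal R M" "\<not> P \<subseteq> M" for M
    using assms that G(2) rspan_subset_rideal[OF t_maximal_rideal[OF that(1)]]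
    unfolding isolating_ideal_def by blast
  ultimately show ?thesis using that G by blast
qed

lemma isolating_ideal_if_not_in_loc:
  assumes P: "prime_ideal R P" and g: "\<not> in_loc P g"
    and out: "\<And>M. t_maximal R M \<Longrightarrow> \<not> P \<subseteq> M \<Longrightarrow> in_loc M g"
  shows "\<exists>J. isolating_ideal P J"
proof -
  have g0: "g \<noteq> 0" using g in_loc_R[OF P zero_in_R] by auto
  define D where "D = {d \<in> R. d * g \<in> R}"
  have D: "rideal R D" unfolding D_def using rideal_conductor[OF rsubmodule_R] .
  have DP: "D \<subseteq> P" unfolding D_def using g in_locI[of _ P g] by blast
  define E where "E = {d + g * d' | d d'. d \<in> D \<and> d' \<in> D}"
  have E: "rideal R E"
    unfolding E_def by (rule rideal_add_mult[OF D]) (simp add: D_def mult.commute)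
  have "\<not> E \<subseteq> M" if M: "t_maximal R M" for M
    using in_loc_or_inverse[OF t_maximal_under_t_maximal[OF M] g0]
  proof
    assume "in_loc M g"
    then obtain s where s: "s \<in> R" "s \<notin> M" "s * g \<in> R" by (rule in_locE)
    then have "s \<in> D" unfolding D_def by blast
    then have "s + g * 0 \<in> E" unfolding E_def using rideal_zero[OF D] by blast
    then show ?thesis using s(2) by auto
  next
    assume "in_loc M (inverse g)"
    then obtain s where s: "s \<in> R" "s \<notin> M" "s * inverse g \<in> R" by (rule in_locE)
    then have "s * inverse g \<in> D" unfolding D_def using g0 by (simp add: mult.assoc)
    moreover have "s = 0 + g * (s * inverse g)" using g0 by (simp add: field_simps)
    ultimately have "s \<in> E" unfolding E_def using rideal_zero[OF D] by blast
    then show ?thesis using s(2) by blast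
  qed
  then obtain U where U: "finite U" "U \<subseteq> E" "\<And>M. t_maximal R M \<Longrightarrow> \<not> U \<subseteq> M"
    using finite_subset_not_in_t_maximal[OF rideal_subset_R[OF E]] by blast
  have "\<forall>u\<in>U. \<exists>d d'. d \<in> D \<and> d' \<in> D \<and> u = d + g * d'"
    using U(2) unfolding E_def by blast
  then obtain f1 f2 where f: "\<And>u. u \<in> U \<Longrightarrow> f1 u \<in> D \<and> f2 u \<in> D \<and> u = f1 u + g * f2 u"
    by metis
  define J where "J = rspan R (f1 ` U \<union> f2 ` U)"
  have gens: "f1 ` U \<union> f2 ` U \<subseteq> D" using f by blast
  have "finite (f1 ` U \<union> f2 ` U)" using U(1) by blast
  then have J: "rideal R J" "fin_gen R J" "J \<subseteq> P"
    using rideal_rspan[OF subset_trans[OF gens rideal_subset_R[OF D]]]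
      rspan_subset_rideal[OF D gens] DP unfolding J_def fin_gen_def by blast+
  have "\<not> J \<subseteq> M" if M: "t_maximal R M" "\<not> P \<subseteq> M" for M
  proof
    assume JM: "J \<subseteq> M"
    obtain t where t: "t \<in> R" "t \<notin> M" "t * g \<in> R" using out[OF M] by (rule in_locE)
    have MP: "prime_ideal R M" using t_maximal_prime[OF M(1)] .
    have "U \<subseteq> M"
    proof
      fix u assume u: "u \<in> U"
      have f12: "f1 u \<in> M" "f2 u \<in> M" "f1 u \<in> R" "f2 u \<in> R"
        using JM u rspan_superset[of "f1 ` U \<union> f2 ` U"] gens rideal_subset_R[OF D]
        unfolding J_def by blast+
      have "u = f1 u + g * f2 u" using f[OF u] by blast
      then have "t * u = t * (f1 u + g * f2 u)" by (rule arg_cong)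
      also have "\<dots> = t * f1 u + (t * g) * f2 u" by (simp add: algebra_simps)
      also have "\<dots> \<in> M"
        using rideal_add[OF t_maximal_rideal[OF M(1)]
            rideal_mult_left[OF t_maximal_rideal[OF M(1)] t(1) f12(1)]
            rideal_mult_left[OF t_maximal_rideal[OF M(1)] t(3) f12(2)]] .
      finally have "t * u \<in> M" .
      moreover have "u \<in> R" using u U(2) rideal_subset_R[OF E] by blast
      ultimately show "u \<in> M" using prime_idealD(3)[OF MP t(1)] t(2) by blast
    qed
    then show False using U(3)[OF M(1)] by blast
  qed
  then show ?thesis unfolding isolating_ideal_def using J by blast
qed

lemma isolating_if_radical_vop:
  assumes J: "rideal R J" "fin_gen R J" "J \<noteq> {0}" "P = rad R (vop R J)"
  shows "isolating_ideal P J"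
proof -
  have "J \<subseteq> P"
  proof
    fix x assume x: "x \<in> J"
    then have "x ^ 1 \<in> vop R J" using vop_superset by auto
    then show "x \<in> P" unfolding J(4) using radI rideal_in_R[OF J(1) x] by blast
  qed
  moreover have "\<not> J \<subseteq> M" if M: "t_maximal R M" "\<not> P \<subseteq> M" for M
  proof
    assume "J \<subseteq> M"
    then have "vop R J \<subseteq> M" using t_maximal_vop_subset[OF M(1) _ J(3) J(2)] by blast
    then have "P \<subseteq> M"
      unfolding J(4) rad_def using prime_power_imp_in[OF t_maximal_prime[OF M(1)]] by blast
    then show False using M(2) by blast
  qed
  ultimately show ?thesis unfolding isolating_ideal_def using J(1,2) by blast
qed

lemma t_prime_under_t_maximal:
  assumes "t_prime R P"
  shows "under_t_maximal P"
proof -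
  have P: "prime_ideal R P" "t_ideal R P" using assms unfolding t_prime_def by auto
  obtain M where "t_maximal R M" "P \<subseteq> M"
    using t_ideal_le_t_maximal[OF P(2) prime_idealD(2)[OF P(1)]] by blast
  then show ?thesis unfolding under_t_maximal_def using P by blast
qed

lemma branched_loc_dvd_generator:
  assumes P: "under_t_maximal P" "branched R P"
  obtains z where "z \<in> P" "z \<noteq> 0" "\<And>y. y \<in> P \<Longrightarrow> \<exists>k. loc_dvd P z (y ^ k)"
proof -
  have Pp: "prime_ideal R P" using under_t_maximal_prime[OF P(1)] .
  obtain Q where Q: "primary_ideal R Q" "rad R Q = P" "Q \<noteq> P"
    using P(2) unfolding branched_def by blast
  have Qi: "rideal R Q" using Q(1) unfolding primary_ideal_def by blast
  have "Q \<subseteq> P" using Q(2) radI[of _ 1] rideal_in_R[OF Qi] by auto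
  then obtain z where z: "z \<in> P" "z \<notin> Q" using Q(3) by blast
  have zR: "z \<in> R" using prime_in_R[OF Pp z(1)] .
  have "\<exists>k. loc_dvd P z (y ^ k)" if y: "y \<in> P" for y
  proof -
    obtain k where k: "y ^ k \<in> Q" using y Q(2) by (auto elim: radE)
    from loc_dvd_total[OF P(1) zR power_in_R[OF prime_in_R[OF Pp y]]]
    have "loc_dvd P z (y ^ k)"
    proof
      assume "loc_dvd P (y ^ k) z"
      then obtain s r where sr: "s \<in> R" "s \<notin> P" "r \<in> R" "s * z = r * y ^ k"
        by (rule loc_dvdE)
      have "z * s \<in> Q" using rideal_mult_left[OF Qi sr(3) k] sr(4) by (simp add: mult.commute)
      then have "z \<in> Q \<or> s \<in> rad R Q"
        using Q(1) zR sr(1) unfolding primary_ideal_def by blast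
      then show ?thesis using z(2) sr(2) Q(2) by blast
    qed
    then show ?thesis by blast
  qed
  moreover have "z \<noteq> 0" using z(2) rideal_zero[OF Qi] by auto
  ultimately show ?thesis using that z(1) by blast
qed

lemma radical_vop_if_isolating:
  assumes P: "t_prime R P" "branched R P" and J: "isolating_ideal P J"
  shows "\<exists>F. rideal R F \<and> fin_gen R F \<and> F \<noteq> {0} \<and> P = rad R (vop R F)"
proof -
  have Pp: "prime_ideal R P" "t_ideal R P" using P(1) unfolding t_prime_def by auto
  obtain z where z: "z \<in> P" "z \<noteq> 0" and zdvd: "\<And>y. y \<in> P \<Longrightarrow> \<exists>k. loc_dvd P z (y ^ k)"
    using branched_loc_dvd_generator[OF t_prime_under_t_maximal[OF P(1)] P(2)] by blast
  obtain G where G: "finite G" "G \<subseteq> P" "J = rspan R G"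
    and Gout: "\<And>M. t_maximal R M \<Longrightarrow> \<not> P \<subseteq> M \<Longrightarrow> \<exists>g\<in>G. g \<notin> M"
    using isolating_idealE[OF J] by blast
  define F where "F = rspan R (insert z G)"
  have gens: "insert z G \<subseteq> P" using G(2) z(1) by blast
  have "insert z G \<subseteq> R" using gens prime_in_R[OF Pp(1)] by blast
  then have F: "rideal R F" "fin_gen R F" "F \<noteq> {0}" "F \<subseteq> P"
    unfolding F_def fin_gen_def
    using rideal_rspan G(1) rspan_neq_zero[of z "insert z G"] z(2)
      rspan_subset_rideal[OF prime_idealD(1)[OF Pp(1)] gens] by auto
  have "rad R (vop R F) \<subseteq> P"
    using t_ideal_vop_subset[OF Pp(2) F(4) F(3) F(2)] prime_power_imp_in[OF Pp(1)]
    unfolding rad_def by blast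
  moreover have "P \<subseteq> rad R (vop R F)"
  proof
    fix y assume y: "y \<in> P"
    have yR: "y \<in> R" using prime_in_R[OF Pp(1) y] .
    obtain k where k: "loc_dvd P z (y ^ k)" using zdvd[OF y] by blast
    have "\<exists>g\<in>insert z G. loc_dvd M g (y ^ Suc k)" if M: "t_maximal R M" for M
    proof (cases "P \<subseteq> M")
      case True
      then show ?thesis using loc_dvd_power_Suc[OF Pp(1) y k M True] by blast
    next
      case False
      then obtain g where "g \<in> G" "g \<notin> M" using Gout[OF M] by blast
      moreover have "g \<in> R" using \<open>g \<in> G\<close> G(2) prime_in_R[OF Pp(1)] by blast
      ultimately show ?thesis using loc_dvd_unit[of g M "y ^ Suc k"] power_in_R[OF yR] by blast
    qed
    then have "y ^ Suc k \<in> vop R F" unfolding F_def by (rule vop_if_loc_dvd_generator)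
    then show "y \<in> rad R (vop R F)" using radI[OF yR] by blast
  qed
  ultimately show ?thesis using F by blast
qed

section \<open>The t-radical trace property\<close>

definition trace_gens :: "'k set \<Rightarrow> 'k set" where
  "trace_gens I = {a * b | a b. a \<in> I \<and> b \<in> colon R I}"

lemma iprod_colon_eq: "iprod R I (colon R I) = rspan R (trace_gens I)"
  unfolding iprod_def trace_gens_def by simp

lemma trace_gens_subset_R:
  assumes I: "rideal R I"
  shows "trace_gens I \<subseteq> R"
proof
  fix x assume "x \<in> trace_gens I"
  then obtain a b where ab: "a \<in> I" "b \<in> colon R I" "x = a * b" unfolding trace_gens_def by blast
  have "b * a \<in> R" using colonD[OF ab(2) ab(1)] .
  then show "x \<in> R" using ab(3) by (simp add: mult.commute)
qed

lemma trace_gensI: "a \<in> I \<Longrightarrow> b \<in> colon R I \<Longrightarrow> a * b \<in> trace_gens I"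
  unfolding trace_gens_def by blast

lemma trace_ideal:
  assumes I: "rideal R I" "I \<noteq> {0}"
  shows "rideal R (rspan R (trace_gens I))" "I \<subseteq> rspan R (trace_gens I)" "rspan R (trace_gens I) \<noteq> {0}"
    "rspan R (trace_gens I) \<subseteq> R"
proof -
  show Ai: "rideal R (rspan R (trace_gens I))" using rideal_rspan[OF trace_gens_subset_R[OF I(1)]] .
  show IA: "I \<subseteq> rspan R (trace_gens I)"
  proof
    fix a assume a: "a \<in> I"
    have "1 \<in> colon R I" using one_in_colon[OF rideal_subset_R[OF I(1)]] .
    then have "a * 1 \<in> trace_gens I" using trace_gensI[OF a] by blast
    then show "a \<in> rspan R (trace_gens I)" using rspan_superset by auto
  qed
  show "rspan R (trace_gens I) \<noteq> {0}" using IA I(2) rideal_zero[OF I(1)] by blast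
  show "rspan R (trace_gens I) \<subseteq> R" using rideal_subset_R[OF Ai] .
qed

lemma rspan_loc_dvd_generator:
  assumes P: "under_t_maximal P" and S: "S \<subseteq> R" and x: "x \<in> rspan R S" "x \<noteq> 0"
  shows "\<exists>w\<in>S. loc_dvd P w x"
proof -
  obtain F r where F: "finite F" "F \<subseteq> S" "\<forall>s\<in>F. r s \<in> R" "x = (\<Sum>s\<in>F. r s * s)"
    using x(1) unfolding rspan_def by blast
  have "F \<noteq> {}" using F(4) x(2) by auto
  then obtain w where w: "w \<in> F" "\<forall>h\<in>F. loc_dvd P w h"
    using loc_dvd_least[OF P F(1)] F(2) S by blast
  have "x \<in> rspan R F" unfolding rspan_def using F by blast
  then have "loc_dvd P w x" using loc_dvd_rspan[OF under_t_maximal_prime[OF P] w(2)] by blast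
  then show ?thesis using w(1) F(2) by blast
qed

lemma rad_subset_top_t_trace:
  assumes "tRTP R" and I: "rideal R I" "I \<noteq> {0}"
  shows "rad R I \<subseteq> top_t R (rspan R (trace_gens I))"
proof -
  define T where "T = top_t R (rspan R (trace_gens I))"
  have "T = R \<or> rad R T = T"
    using assms unfolding tRTP_def T_def iprod_colon_eq by blast
  moreover have "I \<subseteq> T"
    using trace_ideal[OF I] top_t_superset[of "rspan R (trace_gens I)"] unfolding T_def by blast
  ultimately show ?thesis unfolding T_def[symmetric] rad_def by blast
qed

lemma trace_subset_loc_extension:
  assumes P: "prime_ideal R P" and Q: "rideal R Q" and colon: "\<forall>g\<in>colon R Q. in_loc P g"
  shows "rspan R (trace_gens Q) \<subseteq> loc_extension P Q"
proof (rule rspan_least[OF rsubmodule_loc_extension[OF P Q]], rule subsetI)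
  fix w assume "w \<in> trace_gens Q"
  then obtain a g where ag: "a \<in> Q" "g \<in> colon R Q" "w = a * g" unfolding trace_gens_def by blast
  obtain s where s: "s \<in> R" "s \<notin> P" "s * g \<in> R" using colon ag(2) by (meson in_locE)
  have "s * w = (s * g) * a" using ag(3) by (simp add: ac_simps)
  then have "s * w \<in> Q" using rideal_mult_left[OF Q s(3) ag(1)] by (simp only:)
  then show "w \<in> loc_extension P Q" unfolding loc_extension_def using s by blast
qed

lemma isolating_if_tRTP:
  assumes tRTP: "tRTP R" and P: "t_prime R P" "branched R P"
  shows "\<exists>J. isolating_ideal P J"
proof -
  have Pp: "prime_ideal R P" "t_ideal R P" using P unfolding t_prime_def by auto
  obtain Q where Q: "primary_ideal R Q" "rad R Q = P" "Q \<noteq> P"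
    using P(2) unfolding branched_def by blast
  have Qi: "rideal R Q" using Q unfolding primary_ideal_def by blast
  have QP: "Q \<subseteq> P" using Q(2) radI[of _ 1] rideal_in_R[OF Qi] by auto
  have powQ: "\<exists>n. p ^ n \<in> Q" if "p \<in> P" for p using that Q(2) by (auto elim: radE)
  obtain p where p: "p \<in> P" "p \<noteq> 0" using t_idealD[OF Pp(2)] rideal_zero by blast
  moreover obtain n where "p ^ n \<in> Q" using powQ[OF p(1)] by blast
  ultimately have "Q \<noteq> {0}" by (metis power_not_zero singletonD)
  then have PT: "P \<subseteq> top_t R (rspan R (trace_gens Q))"
    using rad_subset_top_t_trace[OF tRTP Qi] Q(2) by blast
  obtain M0 where M0: "t_maximal R M0" "P \<subseteq> M0"
    using t_ideal_le_t_maximal[OF Pp(2) prime_idealD(2)[OF Pp(1)]] by blast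
  have "\<exists>g\<in>colon R Q. \<not> in_loc P g"
  proof (rule ccontr)
    assume "\<not> ?thesis"
    then have A: "rspan R (trace_gens Q) \<subseteq> loc_extension P Q"
      using trace_subset_loc_extension[OF Pp(1) Qi] by blast
    have "P \<subseteq> Q"
    proof
      fix p assume p: "p \<in> P"
      obtain s where s: "s \<in> R" "s \<notin> M0" "s * p \<in> rspan R (trace_gens Q)"
        using top_t_locally_in[OF M0(1) trace_ideal(1)[OF Qi \<open>Q \<noteq> {0}\<close>]] PT p
          by blast
      then obtain t where t: "t \<in> R" "t \<notin> P" "t * (s * p) \<in> Q"
        using A unfolding loc_extension_def by blast
      have "p * (t * s) \<in> Q" using t(3) by (simp add: ac_simps)
      moreover have "t * s \<notin> P"
        using prime_mult_notin[OF Pp(1) t(1) s(1) t(2)] s(2) M0(2) by blast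
      ultimately show "p \<in> Q"
        using Q(1,2) prime_in_R[OF Pp(1) p] mult_in_R[OF t(1) s(1)] unfolding primary_ideal_def by blast
    qed
    then show False using QP Q(3) by blast
  qed
  then obtain g where g: "g \<in> colon R Q" "\<not> in_loc P g" by blast
  have "in_loc M g" if M: "t_maximal R M" "\<not> P \<subseteq> M" for M
  proof -
    have "\<not> Q \<subseteq> M"
      using M powQ prime_power_imp_in[OF t_maximal_prime[OF M(1)] prime_in_R[OF Pp(1)]] by blast
    then obtain q where q: "q \<in> Q" "q \<notin> M" by blast
    have "q * g \<in> R" using colonD[OF g(1) q(1)] by (simp add: mult.commute)
    then show "in_loc M g" using q rideal_in_R[OF Qi q(1)] by (intro in_locI[of q]) auto
  qed
  then show ?thesis using isolating_ideal_if_not_in_loc[OF Pp(1) g(2)] by blast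
qed

definition isolated_branched :: bool where
  "isolated_branched \<longleftrightarrow> (\<forall>P. t_prime R P \<and> branched R P \<longrightarrow> (\<exists>J. isolating_ideal P J))"

lemma trace_generator_loc_dvd:
  assumes M: "t_maximal R M" and I: "rideal R I" "I \<noteq> {0}"
    and x: "x \<in> top_t R (rspan R (trace_gens I))" "x \<noteq> 0"
  obtains b c where "b \<in> I" "c \<in> colon R I" "c \<noteq> 0" "loc_dvd M (b * c) x"
proof -
  have Mp: "prime_ideal R M" using t_maximal_prime[OF M] .
  obtain s where s: "s \<in> R" "s \<notin> M" "s * x \<in> rspan R (trace_gens I)"
    using top_t_locally_in[OF M trace_ideal(1)[OF I] x(1)] by blast
  have "s * x \<noteq> 0" using s(2) x(2) prime_zero_in[OF Mp] by auto
  then obtain w where w: "w \<in> trace_gens I" "loc_dvd M w (s * x)"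
    using rspan_loc_dvd_generator[OF t_maximal_under_t_maximal[OF M] trace_gens_subset_R[OF I(1)] s(3)]
    by blast
  obtain b c where bc: "b \<in> I" "c \<in> colon R I" "w = b * c"
    using w(1) unfolding trace_gens_def by blast
  have dvd: "loc_dvd M (b * c) x" using loc_dvd_cancel_unit[OF Mp s(1,2) w(2)] bc(3) by simp
  have "c \<noteq> 0"
  proof
    assume "c = 0"
    then have "loc_dvd M 0 x" using dvd by simp
    then show False using loc_dvd_zero_left[OF Mp] x(2) by blast
  qed
  then show ?thesis using that bc(1,2) dvd by blast
qed

lemma exists_element_bounding_mult_ideal:
  assumes P: "under_t_maximal P" and y: "y \<in> P" "y \<noteq> 0" and I: "rideal R I"
    and bc: "b0 \<in> I" "c0 \<in> colon R I" "loc_dvd P (b0 * c0) (y ^ n)"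
  shows "\<exists>b\<in>I. \<forall>b'\<in>I. \<exists>s\<in>R. s \<notin> P \<and> (\<exists>q\<in>P. s * (y * b') = q * b)"
proof (rule ccontr)
  assume none: "\<not> ?thesis"
  have Pp: "prime_ideal R P" using under_t_maximal_prime[OF P] .
  have yR: "y \<in> R" using prime_in_R[OF Pp y(1)] .
  have step: "\<exists>b'\<in>I. loc_dvd P (y * b') b" if b: "b \<in> I" for b
  proof -
    obtain b' where b': "b' \<in> I" "\<not> (\<exists>s\<in>R. s \<notin> P \<and> (\<exists>q\<in>P. s * (y * b') = q * b))"
      using none b by blast
    have bR: "b \<in> R" "y * b' \<in> R" using b b' rideal_in_R[OF I] yR by auto
    from loc_dvd_total[OF P bR(2) bR(1)] have "loc_dvd P (y * b') b"
    proof
      assume "loc_dvd P b (y * b')"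
      then obtain s r where sr: "s \<in> R" "s \<notin> P" "r \<in> R" "s * (y * b') = r * b"
        by (rule loc_dvdE)
      then have "r \<notin> P" using b'(2) by blast
      then show ?thesis using sr by (intro loc_dvdI[of r _ s]) auto
    qed
    then show ?thesis using b'(1) by blast
  qed
  have chain: "\<exists>b'\<in>I. loc_dvd P (y ^ k * b') b" if "b \<in> I" for k b
    using that
  proof (induction k arbitrary: b)
    case 0
    have "loc_dvd P (y ^ 0 * b) b" using loc_dvd_refl[OF Pp] by simp
    then show ?case using 0 by blast
  next
    case (Suc k)
    obtain b1 where b1: "b1 \<in> I" "loc_dvd P (y * b1) b" using step[OF Suc.prems] by blast
    obtain b2 where b2: "b2 \<in> I" "loc_dvd P (y ^ k * b2) b1" using Suc.IH[OF b1(1)] by blast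
    have "loc_dvd P (y * (y ^ k * b2)) (y * b1)" using loc_dvd_mult_both[OF b2(2)] .
    then have "loc_dvd P (y ^ Suc k * b2) (y * b1)" by (simp add: mult.assoc)
    then have "loc_dvd P (y ^ Suc k * b2) b" using loc_dvd_trans[OF Pp _ b1(2)] by blast
    then show ?case using b2(1) by blast
  qed
  obtain b' where b': "b' \<in> I" "loc_dvd P (y ^ Suc n * b') b0" using chain[OF bc(1)] by blast
  have "loc_dvd P (c0 * (y ^ Suc n * b')) (c0 * b0)" using loc_dvd_mult_both[OF b'(2)] .
  moreover have "loc_dvd P (c0 * b0) (y ^ n)" using bc(3) by (simp add: mult.commute)
  ultimately have "loc_dvd P (c0 * (y ^ Suc n * b')) (y ^ n)" by (rule loc_dvd_trans[OF Pp])
  then obtain s r where sr: "s \<in> R" "s \<notin> P" "r \<in> R" "s * y ^ n = r * (c0 * (y ^ Suc n * b'))"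
    by (rule loc_dvdE)
  have "y ^ n * s = y ^ n * (r * y * (c0 * b'))" using sr(4) by (simp add: ac_simps)
  then have "s = r * y * (c0 * b')" using y(2) by simp
  moreover have "c0 * b' \<in> R" using colonD[OF bc(2) b'(1)] .
  moreover have "r * y \<in> P" using rideal_mult_left[OF prime_idealD(1)[OF Pp] sr(3) y(1)] .
  ultimately have "s \<in> P" using rideal_mult_right[OF prime_idealD(1)[OF Pp]] by simp
  then show False using sr(2) by blast
qed

lemma loc_dvd_power_Suc_shift:
  assumes P: "prime_ideal R P" and M: "t_maximal R M" "P \<subseteq> M"
    and dvd: "loc_dvd M (a * c) (y ^ n)"
    and s: "s \<in> R" "s \<notin> P" and q: "q \<in> P" and eq: "s * (y * a) = q * b"
  shows "loc_dvd M (c * b) (y ^ Suc n)"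
proof -
  have s0: "s \<noteq> 0" using s prime_zero_in[OF P] by auto
  obtain v where v: "v \<in> R" "v \<notin> M" "v * (q / s) \<in> R"
    using in_loc_div_outside[OF P M q s] by (rule in_locE)
  obtain u r where ur: "u \<in> R" "u \<notin> M" "r \<in> R" "u * y ^ n = r * (a * c)"
    using dvd by (rule loc_dvdE)
  have "(v * u) * y ^ Suc n = v * y * (u * y ^ n)" by (simp add: ac_simps)
  also have "\<dots> = v * r * c * (y * a)" using ur(4) by (simp add: ac_simps)
  also have "\<dots> = v * r * c * (q * b / s)" using eq s0 by (simp add: field_simps)
  also have "\<dots> = (r * (v * (q / s))) * (c * b)" by (simp add: field_simps)
  finally have "(v * u) * y ^ Suc n = (r * (v * (q / s))) * (c * b)" .
  moreover have "v * u \<notin> M"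
    using prime_mult_notin[OF t_maximal_prime[OF M(1)] v(1) ur(1) v(2) ur(2)] .
  moreover have "r * (v * (q / s)) \<in> R" using mult_in_R[OF ur(3) v(3)] .
  ultimately show ?thesis using v ur by (intro loc_dvdI[of "v * u" _ "r * (v * (q / s))"]) auto
qed

lemma in_colon_if_isolated:
  assumes P: "prime_ideal R P" and y: "y \<in> R"
    and G: "G \<subseteq> P" "\<And>M. t_maximal R M \<Longrightarrow> \<not> P \<subseteq> M \<Longrightarrow> \<exists>g\<in>G. g \<notin> M"
    and d: "d \<in> R" "\<And>g. g \<in> G \<Longrightarrow> \<exists>e. \<exists>r\<in>R. d * g ^ e = r * (c * b)"
    and bc: "b \<noteq> 0" "c \<noteq> 0" "c \<in> colon R I"
    and bounds: "\<forall>b'\<in>I. \<exists>s\<in>R. s \<notin> P \<and> (\<exists>q\<in>P. s * (y * b') = q * b)"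
  shows "d * y / b \<in> colon R I"
proof (rule colonI)
  fix b' assume b': "b' \<in> I"
  have "in_loc M (d * y / b * b')" if M: "t_maximal R M" for M
  proof (cases "P \<subseteq> M")
    case True
    obtain s q where sq: "s \<in> R" "s \<notin> P" "q \<in> P" "s * (y * b') = q * b"
      using bounds b' by blast
    have s0: "s \<noteq> 0" using sq prime_zero_in[OF P] by auto
    have "d * y / b * b' = d * (y * b') / b" by (simp add: field_simps)
    also have "\<dots> = d * (q * b / s) / b" using sq(4) s0 by (simp add: field_simps)
    also have "\<dots> = d * (q / s)" using bc(1) s0 by (simp add: field_simps)
    finally have "d * y / b * b' = d * (q / s)" .
    moreover have "in_loc M (d * (q / s))"
      using in_loc_mult[OF t_maximal_prime[OF M] in_loc_R[OF t_maximal_prime[OF M] d(1)]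
          in_loc_div_outside[OF P M True sq(3) sq(1,2)]] .
    ultimately show ?thesis by simp
  next
    case False
    then obtain g where g: "g \<in> G" "g \<notin> M" using G(2)[OF M] by blast
    obtain e r where er: "r \<in> R" "d * g ^ e = r * (c * b)" using d(2)[OF g(1)] by blast
    have "g ^ e * (d * y / b * b') = (d * g ^ e) * (y * b') / b" by (simp add: field_simps)
    also have "\<dots> = r * (c * b) * (y * b') / b" by (simp only: er(2))
    also have "\<dots> = y * (c * b') * r" using bc(1) by (simp add: field_simps)
    finally have eq: "g ^ e * (d * y / b * b') = y * (c * b') * r" .
    have "y * (c * b') * r \<in> R" using y colonD[OF bc(3) b'] er(1) by blast
    then have "g ^ e * (d * y / b * b') \<in> R" by (simp only: eq)
    moreover have gR: "g \<in> R" using G(1) g(1) prime_in_R[OF P] by blast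
    ultimately show ?thesis
      using in_locI[OF power_in_R[OF gR] prime_power_notin[OF t_maximal_prime[OF M] gR g(2)]] by blast
  qed
  then show "d * y / b * b' \<in> R" using in_loc_all_t_maximal by blast
qed

lemma loc_in_trace_if_power_in_top_t:
  assumes iso: isolated_branched and I: "rideal R I" "I \<noteq> {0}" and M: "t_maximal R M"
    and y: "y \<in> R" "y ^ n \<in> top_t R (rspan R (trace_gens I))"
  shows "\<exists>s\<in>R. s \<notin> M \<and> s * y \<in> rspan R (trace_gens I)"
proof (rule ccontr)
  assume H: "\<not> ?thesis"
  define A where "A = rspan R (trace_gens I)"
  have A: "rideal R A" using trace_ideal(1)[OF I] unfolding A_def .
  have Mp: "prime_ideal R M" using t_maximal_prime[OF M] .
  have y0: "y \<noteq> 0"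
  proof
    assume "y = 0"
    then have "1 * y \<in> A" using rideal_zero[OF A] by simp
    then show False using H one_in_R prime_one_notin[OF Mp] unfolding A_def by blast
  qed
  have yM: "y \<in> M"
  proof (rule ccontr)
    assume "y \<notin> M"
    obtain s where s: "s \<in> R" "s \<notin> M" "s * y ^ n \<in> A"
      using top_t_locally_in[OF M A] y(2) unfolding A_def by blast
    have "s * y ^ n \<notin> M"
      using prime_mult_notin[OF Mp s(1) power_in_R[OF y(1)] s(2) prime_power_notin[OF Mp y(1) \<open>y \<notin> M\<close>]] .
    moreover have "(s * y ^ n) * y \<in> A" using rideal_mult_right[OF A y(1) s(3)] .
    ultimately show False using H mult_in_R[OF s(1) power_in_R[OF y(1)]] unfolding A_def by blast
  qed
  have "y ^ n \<noteq> 0" using y0 by simp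
  then obtain b0 c0 where bc: "b0 \<in> I" "c0 \<in> colon R I" "c0 \<noteq> 0" "loc_dvd M (b0 * c0) (y ^ n)"
    using trace_generator_loc_dvd[OF M I y(2)] by blast
  define P where "P = loc_radical M y"
  have mp: "minimal_prime R (rspan R {y}) P" unfolding P_def using loc_radical_minimal_prime[OF M yM] .
  have Pp: "prime_ideal R P" "P \<subseteq> M" "y \<in> P"
    using prime_loc_radical[OF M yM] loc_radical_subset[OF M yM] loc_radical_in[OF M y(1)]
    unfolding P_def by auto
  have Pu: "under_t_maximal P" unfolding under_t_maximal_def using Pp M by blast
  have rad: "\<exists>k. loc_dvd M y (x ^ k)" if "x \<in> P" for x
    using that unfolding P_def loc_radical_def by blast
  have "t_prime R P" "branched R P"
    using minimal_prime_principal_t_prime[OF y(1) y0 mp] minimal_prime_principal_branched[OF y(1) y0 mp]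
      by auto
  then obtain J where J: "isolating_ideal P J" using iso unfolding isolated_branched_def by blast
  obtain G where G: "finite G" "G \<subseteq> P" "J = rspan R G"
    and Gout: "\<And>M'. t_maximal R M' \<Longrightarrow> \<not> P \<subseteq> M' \<Longrightarrow> \<exists>g\<in>G. g \<notin> M'"
    using isolating_idealE[OF J] by blast
  obtain b where b: "b \<in> I" and bounds: "\<forall>b'\<in>I. \<exists>s\<in>R. s \<notin> P \<and> (\<exists>q\<in>P. s * (y * b') = q * b)"
    using exists_element_bounding_mult_ideal[OF Pu Pp(3) y0 I(1) bc(1,2)] bc(4) loc_dvd_antimono[OF Pp(2)]
    by blast
  have b0: "b \<noteq> 0"
  proof
    assume "b = 0"
    have "b' = 0" if b': "b' \<in> I" for b'
    proof -
      obtain s q where "s \<in> R" "s \<notin> P" "q \<in> P" "s * (y * b') = q * b"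
        using bounds b' by blast
      then show ?thesis using \<open>b = 0\<close> y0 prime_zero_in[OF Pp(1)] by auto
    qed
    then show False using I(2) rideal_zero[OF I(1)] by blast
  qed
  have dvd: "loc_dvd M (c0 * b) (y ^ Suc n)"
    using bounds bc(1) loc_dvd_power_Suc_shift[OF Pp(1) M Pp(2) bc(4)] by blast
  have dvdG: "\<exists>k. loc_dvd M (c0 * b) (g ^ k)" if g: "g \<in> G" for g
  proof -
    obtain k where "loc_dvd M y (g ^ k)" using rad G(2) g by blast
    then have "loc_dvd M (y ^ Suc n) ((g ^ k) ^ Suc n)" by (rule loc_dvd_power[OF Mp])
    then have "loc_dvd M (c0 * b) ((g ^ k) ^ Suc n)" by (rule loc_dvd_trans[OF Mp dvd])
    then have "loc_dvd M (c0 * b) (g ^ (k * Suc n))" by (simp only: power_mult)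
    then show ?thesis by blast
  qed
  obtain d where d: "d \<in> R" "d \<notin> M" "\<forall>g\<in>G. \<exists>e. \<exists>r\<in>R. d * g ^ e = r * (c0 * b)"
    using common_unit_loc_dvd_powers[OF Mp G(1) dvdG] by blast
  have "d * y / b \<in> colon R I"
    using in_colon_if_isolated[OF Pp(1) y(1) G(2) Gout d(1) d(3)[rule_format] b0 bc(3,2) bounds] .
  then have "b * (d * y / b) \<in> A" unfolding A_def using trace_gensI[OF b] rspan_superset by blast
  moreover have "b * (d * y / b) = d * y" using b0 by simp
  ultimately show False using H d(1,2) unfolding A_def by auto
qed

lemma tRTP_if_isolated_branched:
  assumes iso: isolated_branched shows "tRTP R"
  unfolding tRTP_def iprod_colon_eq
proof (intro allI impI disjI2)
  fix I assume "rideal R I \<and> I \<noteq> {0}"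
  then have I: "rideal R I" "I \<noteq> {0}" by auto
  define T where "T = top_t R (rspan R (trace_gens I))"
  have A: "rideal R (rspan R (trace_gens I))" "rspan R (trace_gens I) \<noteq> {0}"
    using trace_ideal[OF I] by auto
  have T: "t_ideal R T" "rspan R (trace_gens I) \<subseteq> T"
    unfolding T_def using t_ideal_top_t[OF A] top_t_superset[OF A] by auto
  have "rad R T \<subseteq> T"
  proof
    fix y assume "y \<in> rad R T"
    then obtain n where y: "y \<in> R" "y ^ n \<in> T" by (rule radE)
    have "\<exists>s\<in>R. s \<notin> M \<and> s * y \<in> T" if "t_maximal R M" for M
      using loc_in_trace_if_power_in_top_t[OF iso I that y(1)] y(2) T(2) unfolding T_def by blast
    then show "y \<in> T" using t_ideal_locally_in[OF T(1) y(1)] by blast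
  qed
  moreover have "T \<subseteq> rad R T"
  proof
    fix x assume "x \<in> T"
    then show "x \<in> rad R T" using radI[of x 1 T] rideal_in_R[OF t_idealD(1)[OF T(1)]] by simp
  qed
  ultimately show "rad R (top_t R (rspan R (trace_gens I))) = top_t R (rspan R (trace_gens I))"
    unfolding T_def by blast
qed

section \<open>Finiteness of minimal primes\<close>

lemma exists_outside_prime_in_ideals:
  assumes P: "prime_ideal R P" and F: "finite F"
    and ideals: "\<And>Q. Q \<in> F \<Longrightarrow> rideal R Q" and notsub: "\<And>Q. Q \<in> F \<Longrightarrow> \<not> Q \<subseteq> P"
  shows "\<exists>s\<in>R. s \<notin> P \<and> (\<forall>Q\<in>F. s \<in> Q)"
  using F ideals notsub
proof (induction F rule: finite_induct)
  case empty
  then show ?case using prime_one_notin[OF P] one_in_R by blast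
next
  case (insert Q F)
  have "\<exists>s\<in>R. s \<notin> P \<and> (\<forall>Q'\<in>F. s \<in> Q')"
    by (rule insert.IH) (use insert.prems in auto)
  then obtain s where s: "s \<in> R" "s \<notin> P" "\<forall>Q'\<in>F. s \<in> Q'" by blast
  obtain q where q: "q \<in> Q" "q \<notin> P" using insert.prems(2)[of Q] by blast
  have qR: "q \<in> R" using rideal_in_R[OF insert.prems(1)[of Q] q(1)] by simp
  have "q * s \<in> Q" using rideal_mult_right[OF insert.prems(1)[of Q] s(1) q(1)] by simp
  moreover have "q * s \<in> Q'" if "Q' \<in> F" for Q'
    using rideal_mult_left[OF insert.prems(1)[of Q'] qR] s(3) that by simp
  moreover have "q * s \<notin> P" using prime_mult_notin[OF P qR s(1) q(2) s(2)] .
  ultimately show ?case using mult_in_R[OF qR s(1)] by blast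
qed

lemma uniform_power_under_minimal_primes:
  assumes z: "z \<in> R" "z \<noteq> 0" and F: "finite F" "\<And>Q. Q \<in> F \<Longrightarrow> minimal_prime R (rspan R {z}) Q"
    and s: "s \<in> R" "\<And>Q. Q \<in> F \<Longrightarrow> s \<in> Q"
  shows "\<exists>N. \<forall>Q\<in>F. \<forall>M. t_maximal R M \<and> Q \<subseteq> M \<longrightarrow> loc_dvd M z (s ^ N)"
proof (rule common_exponent[OF F(1)])
  show "\<forall>Q\<in>F. \<exists>N. \<forall>M. t_maximal R M \<and> Q \<subseteq> M \<longrightarrow> loc_dvd M z (s ^ N)"
  proof
    fix Q assume Q: "Q \<in> F"
    obtain k where k: "loc_dvd Q z (s ^ k)"
      using minimal_prime_principal_loc_dvd_power[OF z F(2)[OF Q] s(2)[OF Q]] by blast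
    have "loc_dvd M z (s ^ Suc k)" if "t_maximal R M" "Q \<subseteq> M" for M
      using loc_dvd_power_Suc[OF minimal_primeD(1)[OF F(2)[OF Q]] s(2)[OF Q] k that] .
    then show "\<exists>N. \<forall>M. t_maximal R M \<and> Q \<subseteq> M \<longrightarrow> loc_dvd M z (s ^ N)"
      by blast
  qed
next
  fix n m Q assume n: "\<forall>M. t_maximal R M \<and> Q \<subseteq> M \<longrightarrow> loc_dvd M z (s ^ n)" and nm: "n \<le> m"
  show "\<forall>M. t_maximal R M \<and> Q \<subseteq> M \<longrightarrow> loc_dvd M z (s ^ m)"
  proof (intro allI impI)
    fix M assume "t_maximal R M \<and> Q \<subseteq> M"
    then have "loc_dvd M z (s ^ (m - n) * s ^ n)" using n loc_dvd_mult[OF power_in_R[OF s(1)]] by blast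
    moreover have "s ^ (m - n) * s ^ n = s ^ m" using nm by (simp add: power_add[symmetric])
    ultimately show "loc_dvd M z (s ^ m)" by simp
  qed
qed

lemma isolating_if_finite_minimal_primes:
  assumes fin: "\<forall>x\<in>R. x \<noteq> 0 \<longrightarrow> finite {P. minimal_prime R (rspan R {x}) P}"
    and P: "t_prime R P" "branched R P"
  shows "\<exists>J. isolating_ideal P J"
proof -
  have Pp: "prime_ideal R P" using P(1) unfolding t_prime_def by blast
  obtain z where z: "z \<in> P" "z \<noteq> 0" and zdvd: "\<And>y. y \<in> P \<Longrightarrow> \<exists>k. loc_dvd P z (y ^ k)"
    using branched_loc_dvd_generator[OF t_prime_under_t_maximal[OF P(1)] P(2)] by blast
  have zR: "z \<in> R" using prime_in_R[OF Pp z(1)] .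
  have Pmin: "minimal_prime R (rspan R {z}) P"
    using minimal_prime_principal_if_loc_dvd_powers[OF Pp z(1) zdvd] .
  define F where "F = {Q. minimal_prime R (rspan R {z}) Q} - {P}"
  have F: "finite F" "\<And>Q. Q \<in> F \<Longrightarrow> minimal_prime R (rspan R {z}) Q"
    using fin zR z(2) unfolding F_def by auto
  have notsub: "\<not> Q \<subseteq> P" if "Q \<in> F" for Q
    using minimal_primeD(3)[OF Pmin minimal_primeD(1,2)[OF F(2)[OF that]]] that unfolding F_def by blast
  have ideals: "rideal R Q" if "Q \<in> F" for Q
    using prime_idealD(1)[OF minimal_primeD(1)[OF F(2)[OF that]]] .
  obtain s where s: "s \<in> R" "s \<notin> P" "\<forall>Q\<in>F. s \<in> Q"
    using exists_outside_prime_in_ideals[OF Pp F(1) ideals notsub] by blast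
  obtain N where N: "\<forall>Q\<in>F. \<forall>M. t_maximal R M \<and> Q \<subseteq> M \<longrightarrow> loc_dvd M z (s ^ N)"
    using uniform_power_under_minimal_primes[OF zR z(2) F s(1) s(3)[rule_format]] by blast
  define g where "g = s ^ N / z"
  have g: "\<not> in_loc P g"
  proof
    assume "in_loc P g"
    then obtain v where v: "v \<in> R" "v \<notin> P" "v * g \<in> R" by (rule in_locE)
    have "v * s ^ N = (v * g) * z" unfolding g_def using z(2) by simp
    also have "\<dots> \<in> P" using rideal_mult_left[OF prime_idealD(1)[OF Pp] v(3) z(1)] .
    finally have "s ^ N \<in> P" using prime_idealD(3)[OF Pp v(1) power_in_R[OF s(1)]] v(2) by blast
    then show False using prime_power_imp_in[OF Pp s(1)] s(2) by blast
  qed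
  have out: "in_loc M g" if M: "t_maximal R M" "\<not> P \<subseteq> M" for M
  proof (cases "z \<in> M")
    case False
    have "z * g = s ^ N" unfolding g_def using z(2) by simp
    then show ?thesis using zR False power_in_R[OF s(1)] by (intro in_locI[of z]) auto
  next
    case True
    have "loc_radical M z \<in> F"
      using loc_radical_minimal_prime[OF M(1) True] loc_radical_subset[OF M(1) True] M(2)
      unfolding F_def by blast
    then have "loc_dvd M z (s ^ N)" using N loc_radical_subset[OF M(1) True] M(1) by blast
    then obtain t r where tr: "t \<in> R" "t \<notin> M" "r \<in> R" "t * s ^ N = r * z"
      by (rule loc_dvdE)
    have "t * g = r" unfolding g_def using tr(4) z(2) by (simp add: field_simps)
    then show ?thesis using tr by (intro in_locI[of t]) auto
  qed
  show ?thesis using isolating_ideal_if_not_in_loc[OF Pp g out] .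
qed

definition power_conductor :: "'k set \<Rightarrow> 'k \<Rightarrow> 'k set" where
  "power_conductor G z = {d \<in> R. \<forall>g\<in>G. \<exists>e. \<exists>r\<in>R. d * g ^ e = r * z}"

lemma power_conductor_not_subset:
  assumes z: "z \<in> R" "z \<noteq> 0" and mp: "minimal_prime R (rspan R {z}) P"
    and G: "finite G" "G \<subseteq> P" and M: "t_maximal R M" "P \<subseteq> M"
  shows "\<not> power_conductor G z \<subseteq> M"
proof -
  have dvd: "\<exists>k. loc_dvd M z (g ^ k)" if g: "g \<in> G" for g
  proof -
    have gP: "g \<in> P" using G(2) g by blast
    obtain k where "loc_dvd P z (g ^ k)" using minimal_prime_principal_loc_dvd_power[OF z mp gP] by blast
    then show ?thesis using loc_dvd_power_Suc[OF minimal_primeD(1)[OF mp] gP _ M] by blast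
  qed
  obtain d where "d \<in> R" "d \<notin> M" "\<forall>g\<in>G. \<exists>e. \<exists>r\<in>R. d * g ^ e = r * z"
    using common_unit_loc_dvd_powers[OF t_maximal_prime[OF M(1)] G(1) dvd] by blast
  then show ?thesis unfolding power_conductor_def by blast
qed

lemma power_conductor_subset:
  assumes M: "t_maximal R M" "z \<in> M" and g: "g \<in> G" "g \<in> R" "g \<notin> M"
  shows "power_conductor G z \<subseteq> M"
proof
  fix d assume d: "d \<in> power_conductor G z"
  have Mp: "prime_ideal R M" using t_maximal_prime[OF M(1)] .
  obtain e r where er: "r \<in> R" "d * g ^ e = r * z"
    using d g(1) unfolding power_conductor_def by blast
  have "r * z \<in> M" using rideal_mult_left[OF t_maximal_rideal[OF M(1)] er(1) M(2)] .
  then have "d * g ^ e \<in> M" by (simp only: er(2))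
  moreover have "g ^ e \<notin> M" using prime_power_notin[OF Mp g(2,3)] .
  moreover have "d \<in> R" using d unfolding power_conductor_def by blast
  ultimately show "d \<in> M" using prime_idealD(3)[OF Mp _ power_in_R[OF g(2)]] by blast
qed

lemma finite_minimal_primes_if_isolated:
  assumes iso: isolated_branched and z: "z \<in> R" "z \<noteq> 0"
  shows "finite {P. minimal_prime R (rspan R {z}) P}"
proof -
  define F where "F = {P. minimal_prime R (rspan R {z}) P}"
  have mp: "minimal_prime R (rspan R {z}) P" if "P \<in> F" for P using that unfolding F_def by blast
  have "\<forall>P\<in>F. \<exists>G. finite G \<and> G \<subseteq> P \<and> (\<forall>M. t_maximal R M \<and> \<not> P \<subseteq> M \<longrightarrow> (\<exists>g\<in>G. g \<notin> M))"
  proof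
    fix P assume P: "P \<in> F"
    obtain J where J: "isolating_ideal P J"
      using iso minimal_prime_principal_t_prime[OF z mp[OF P]] minimal_prime_principal_branched[OF z mp[OF P]]
      unfolding isolated_branched_def by blast
    obtain G where "finite G" "G \<subseteq> P" "J = rspan R G"
      and "\<And>M. t_maximal R M \<Longrightarrow> \<not> P \<subseteq> M \<Longrightarrow> \<exists>g\<in>G. g \<notin> M"
      using isolating_idealE[OF J] by blast
    then show "\<exists>G. finite G \<and> G \<subseteq> P \<and> (\<forall>M. t_maximal R M \<and> \<not> P \<subseteq> M \<longrightarrow> (\<exists>g\<in>G. g \<notin> M))"
      by blast
  qed
  then obtain Gf where Gf: "\<forall>P\<in>F. finite (Gf P) \<and> Gf P \<subseteq> P \<and>
      (\<forall>M. t_maximal R M \<and> \<not> P \<subseteq> M \<longrightarrow> (\<exists>g\<in>Gf P. g \<notin> M))"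
    by metis
  define S where "S = insert z (\<Union>P\<in>F. power_conductor (Gf P) z)"
  have S: "S \<subseteq> R" unfolding S_def power_conductor_def using z(1) by blast
  have "\<not> S \<subseteq> M" if M: "t_maximal R M" for M
  proof (cases "z \<in> M")
    case True
    have P: "loc_radical M z \<in> F"
      unfolding F_def using loc_radical_minimal_prime[OF M True] by blast
    then have "\<not> power_conductor (Gf (loc_radical M z)) z \<subseteq> M"
      using power_conductor_not_subset[OF z mp[OF P] _ _ M loc_radical_subset[OF M True]] Gf by blast
    then show ?thesis unfolding S_def using P by blast
  qed (simp add: S_def)
  then obtain U where U: "finite U" "U \<subseteq> S" "\<And>M. t_maximal R M \<Longrightarrow> \<not> U \<subseteq> M"
    using finite_subset_not_in_t_maximal[OF S] by blast
  have "\<forall>u\<in>U - {z}. \<exists>P\<in>F. u \<in> power_conductor (Gf P) z"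
    using U(2) unfolding S_def by blast
  then obtain Pu where Pu: "\<forall>u\<in>U - {z}. Pu u \<in> F \<and> u \<in> power_conductor (Gf (Pu u)) z"
    by metis
  have "F \<subseteq> Pu ` (U - {z})"
  proof
    fix P assume P: "P \<in> F"
    obtain M where M: "t_maximal R M" "P \<subseteq> M"
      using t_prime_under_t_maximal[OF minimal_prime_principal_t_prime[OF z mp[OF P]]]
      unfolding under_t_maximal_def by blast
    have zM: "z \<in> M" using minimal_primeD(2)[OF mp[OF P]] rspan_superset M(2) by blast
    show "P \<in> Pu ` (U - {z})"
    proof (rule ccontr)
      assume nP: "P \<notin> Pu ` (U - {z})"
      have "u \<in> M" if u: "u \<in> U" for u
      proof (cases "u = z")
        case False
        then have u': "Pu u \<in> F" "u \<in> power_conductor (Gf (Pu u)) z" "Pu u \<noteq> P"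
          using Pu u nP by auto
        have "\<not> Pu u \<subseteq> M"
          using minimal_primes_under_t_maximal_eq[OF M(1) mp[OF u'(1)] mp[OF P] _ M(2)] u'(3) by blast
        then obtain g where "g \<in> Gf (Pu u)" "g \<notin> M" using Gf u'(1) M(1) by blast
        moreover have "g \<in> R" if "g \<in> Gf (Pu u)" for g
          using that Gf u'(1) prime_in_R[OF minimal_primeD(1)[OF mp[OF u'(1)]]] by blast
        ultimately show ?thesis using power_conductor_subset[OF M(1) zM] u'(2) by blast
      qed (simp add: zM)
      then show False using U(3)[OF M(1)] by blast
    qed
  qed
  moreover have "finite (Pu ` (U - {z}))" using U(1) by blast
  ultimately show ?thesis using finite_subset unfolding F_def by blast
qed

lemma minimal_t_prime_minimal_prime_generator:
  assumes G: "finite G" "G \<subseteq> R" "rspan R G \<noteq> {0}" and mtp: "minimal_t_prime R (rspan R G) P"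
  shows "\<exists>g\<in>G. g \<noteq> 0 \<and> minimal_prime R (rspan R {g}) P"
proof -
  have P: "prime_ideal R P" "t_ideal R P" "rspan R G \<subseteq> P"
    and min: "\<And>Q. t_prime R Q \<Longrightarrow> rspan R G \<subseteq> Q \<Longrightarrow> Q \<subseteq> P \<Longrightarrow> Q = P"
    using mtp unfolding minimal_t_prime_def t_prime_def by auto
  obtain M where M: "t_maximal R M" "P \<subseteq> M"
    using t_ideal_le_t_maximal[OF P(2) prime_idealD(2)[OF P(1)]] by blast
  obtain g where g: "g \<in> G" "g \<noteq> 0" "\<And>h. h \<in> G \<Longrightarrow> loc_dvd M g h"
    using loc_dvd_least_nonzero[OF t_maximal_under_t_maximal[OF M(1)] G] by blast
  have "minimal_prime R (rspan R {g}) P"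
  proof (rule minimal_primeI[OF P(1)])
    show "rspan R {g} \<subseteq> P"
      using principal_subset[OF prime_idealD(1)[OF P(1)]] g(1) P(3) rspan_superset by blast
  next
    fix Q assume Q: "prime_ideal R Q" "rspan R {g} \<subseteq> Q" "Q \<subseteq> P"
    have gQ: "g \<in> Q" using Q(2) rspan_superset by blast
    have QM: "Q \<subseteq> M" using Q(3) M(2) by blast
    have "G \<subseteq> Q"
    proof
      fix h assume h: "h \<in> G"
      obtain s r where sr: "s \<in> R" "s \<notin> M" "r \<in> R" "s * h = r * g"
        using g(3)[OF h] by (rule loc_dvdE)
      have "s * h \<in> Q" unfolding sr(4) using rideal_mult_left[OF prime_idealD(1)[OF Q(1)] sr(3) gQ] .
      then show "h \<in> Q" using prime_idealD(3)[OF Q(1) sr(1)] sr(2) QM h G(2) by blast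
    qed
    then have "rspan R G \<subseteq> Q" using rspan_subset_rideal[OF prime_idealD(1)[OF Q(1)]] by blast
    moreover have "t_prime R Q" using prime_under_t_maximal_t_prime[OF Q(1) _ M(1) QM] gQ g(2) by blast
    ultimately show "Q = P" using min Q(3) by blast
  qed
  then show ?thesis using g(1,2) by blast
qed

lemma finite_minimal_t_primes_if_finite_minimal_primes:
  assumes fin: "\<forall>x\<in>R. x \<noteq> 0 \<longrightarrow> finite {P. minimal_prime R (rspan R {x}) P}"
    and J: "rideal R J" "fin_gen R J" "J \<noteq> {0}"
  shows "finite {P. minimal_t_prime R J P}"
proof -
  obtain G where G: "finite G" "J = rspan R G" using J fin_genD by blast
  have GR: "G \<subseteq> R" using rspan_superset[of G] G(2) rideal_subset_R[OF J(1)] by blast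
  have "{P. minimal_t_prime R J P} \<subseteq> (\<Union>g\<in>G - {0}. {P. minimal_prime R (rspan R {g}) P})"
    using minimal_t_prime_minimal_prime_generator[OF G(1) GR] J(3) unfolding G(2) by blast
  moreover have "finite (\<Union>g\<in>G - {0}. {P. minimal_prime R (rspan R {g}) P})"
    using G(1) fin GR by blast
  ultimately show ?thesis using finite_subset by blast
qed

lemma finite_minimal_primes_if_finite_minimal_t_primes:
  assumes fin: "\<forall>J. rideal R J \<and> fin_gen R J \<and> J \<noteq> {0} \<longrightarrow> finite {P. minimal_t_prime R J P}"
  and z: "z \<in> R" "z \<noteq> 0" shows "finite {P. minimal_prime R (rspan R {z}) P}"
proof -
  have "{P. minimal_prime R (rspan R {z}) P} \<subseteq> {P. minimal_t_prime R (rspan R {z}) P}"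
  proof
    fix P assume "P \<in> {P. minimal_prime R (rspan R {z}) P}"
    then have mp: "minimal_prime R (rspan R {z}) P" by blast
    have "t_prime R P" using minimal_prime_principal_t_prime[OF z mp] .
    moreover have "rspan R {z} \<subseteq> P" using minimal_primeD(2)[OF mp] .
    moreover have "\<forall>Q. t_prime R Q \<and> rspan R {z} \<subseteq> Q \<and> Q \<subseteq> P \<longrightarrow> Q = P"
      using minimal_primeD(3)[OF mp] unfolding t_prime_def by blast
    ultimately show "P \<in> {P. minimal_t_prime R (rspan R {z}) P}"
      unfolding minimal_t_prime_def by blast
  qed
  moreover have "finite {P. minimal_t_prime R (rspan R {z}) P}" using fin principal_ideal[OF z] by blast
  ultimately show ?thesis using finite_subset by blast
qed

lemma top_t_fin_gen:
  assumes J: "rideal R J" "fin_gen R J" "J \<noteq> {0}"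
  shows "top_t R J = vop R J"
proof
  show "top_t R J \<subseteq> vop R J" unfolding top_t_def using vop_mono by blast
  show "vop R J \<subseteq> top_t R J"
  proof
    fix y assume "y \<in> vop R J"
    then show "y \<in> top_t R J" unfolding mem_top_t using J by blast
  qed
qed

lemma finite_minimal_primes_vop_if_finite_minimal_t_primes:
  assumes fin: "\<forall>J. rideal R J \<and> fin_gen R J \<and> J \<noteq> {0} \<longrightarrow> finite {P. minimal_t_prime R J P}"
  and J: "rideal R J" "fin_gen R J" "J \<noteq> {0}" shows "finite {P. minimal_prime R (vop R J) P}"
proof -
  have Vt: "t_ideal R (vop R J)" using t_ideal_top_t[OF J(1) J(3)] top_t_fin_gen[OF J] by simp
  have "{P. minimal_prime R (vop R J) P} \<subseteq> {P. minimal_t_prime R J P}"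
  proof
    fix P assume "P \<in> {P. minimal_prime R (vop R J) P}"
    then have mp: "minimal_prime R (vop R J) P" by blast
    have tP: "t_prime R P" using minimal_prime_t_prime[OF mp Vt] .
    have JP: "J \<subseteq> P" using vop_superset minimal_primeD(2)[OF mp] by blast
    have "\<forall>Q. t_prime R Q \<and> J \<subseteq> Q \<and> Q \<subseteq> P \<longrightarrow> Q = P"
    proof (intro allI impI)
      fix Q assume Q: "t_prime R Q \<and> J \<subseteq> Q \<and> Q \<subseteq> P"
      have Qt: "t_ideal R Q" "prime_ideal R Q" using Q unfolding t_prime_def by auto
      have "vop R J \<subseteq> Q" using t_ideal_vop_subset[OF Qt(1) _ J(3) J(2)] Q by blast
      then show "Q = P" using minimal_primeD(3)[OF mp Qt(2)] Q by blast
    qed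
    then show "P \<in> {P. minimal_t_prime R J P}" unfolding minimal_t_prime_def using tP JP by blast
  qed
  moreover have "finite {P. minimal_t_prime R J P}" using fin J by blast
  ultimately show ?thesis using finite_subset by blast
qed

lemma finite_minimal_primes_if_finite_minimal_primes_vop:
  assumes fin: "\<forall>J. rideal R J \<and> fin_gen R J \<and> J \<noteq> {0} \<longrightarrow> finite {P. minimal_prime R (vop R J) P}"
  and z: "z \<in> R" "z \<noteq> 0" shows "finite {P. minimal_prime R (rspan R {z}) P}"
  using fin principal_ideal[OF z] vop_principal[OF z] by metis

end

theorem theorem1p8:
  fixes R :: "'k::field set"
  assumes "is_subring R" and "has_quotient_field R" and "R \<noteq> UNIV" and "PvMD R"
  defines "c1 \<equiv> tRTP R"
      and "c2 \<equiv> (\<forall>P. t_prime R P \<and> branched R P \<longrightarrow>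
               (\<exists>J. rideal R J \<and> fin_gen R J \<and> J \<subseteq> P \<and>
                    (\<forall>M. t_maximal R M \<and> \<not> P \<subseteq> M \<longrightarrow> \<not> J \<subseteq> M)))"
      and "c3 \<equiv> (\<forall>P. t_prime R P \<and> branched R P \<longrightarrow>
               (\<exists>J. rideal R J \<and> fin_gen R J \<and> J \<noteq> {0} \<and> P = rad R (vop R J)))"
      and "c4 \<equiv> (\<forall>x\<in>R. x \<noteq> 0 \<longrightarrow> finite {P. minimal_prime R (rspan R {x}) P})"
      and "c5 \<equiv> (\<forall>J. rideal R J \<and> fin_gen R J \<and> J \<noteq> {0} \<longrightarrow>
               finite {P. minimal_t_prime R J P})"
      and "c6 \<equiv> (\<forall>J. rideal R J \<and> fin_gen R J \<and> J \<noteq> {0} \<longrightarrow>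
               finite {P. minimal_prime R (vop R J) P})"
  shows "(c1 \<longleftrightarrow> c2) \<and> (c1 \<longleftrightarrow> c3) \<and> (c1 \<longleftrightarrow> c4) \<and> (c1 \<longleftrightarrow> c5) \<and> (c1 \<longleftrightarrow> c6)"
proof -
  interpret pvmd R using assms(1,2,4) by unfold_locales
  have c2: "c2 \<longleftrightarrow> isolated_branched"
    unfolding c2_def isolated_branched_def isolating_ideal_def ..
  have "c1 \<longleftrightarrow> c2"
    unfolding c1_def c2 using isolating_if_tRTP tRTP_if_isolated_branched
    unfolding isolated_branched_def by blast
  moreover have "c2 \<longleftrightarrow> c3"
    unfolding c2 c3_def isolated_branched_def
    using radical_vop_if_isolating isolating_if_radical_vop by blast
  moreover have "c2 \<longleftrightarrow> c4"
    unfolding c2 c4_def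
    using finite_minimal_primes_if_isolated isolating_if_finite_minimal_primes
    unfolding isolated_branched_def by blast
  moreover have "c4 \<longleftrightarrow> c5"
    unfolding c4_def c5_def
    using finite_minimal_t_primes_if_finite_minimal_primes
      finite_minimal_primes_if_finite_minimal_t_primes by blast
  moreover have "c5 \<Longrightarrow> c6" unfolding c5_def c6_def
    using finite_minimal_primes_vop_if_finite_minimal_t_primes by blast
  moreover have "c6 \<Longrightarrow> c4" unfolding c4_def c6_def
    using finite_minimal_primes_if_finite_minimal_primes_vop by blast
  ultimately show ?thesis by blast
qed

end
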